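(* Let $k\ge2$ be a fixed integer, and for each $n$ let $p_1=p_1(n),\dots,p_k=p_k(n)$ be positive integers with $p=p_1+\cdots+p_k$ and $p_i/n\to y_i\in(0,1)$ as $n\to\infty$. Let $\mathbf{O}_1,\dots,\mathbf{O}_k$ be i.i.d. Haar distributed random orthogonal matrices on $O(n-1)$, let $\mathbf{P}_i=\mathbf{I}_{p_i}\oplus\mathbf{0}_{n-1-p_i}$, and let $\mathbf{Q}=\sum_{i=1}^k\mathbf{O}_i'\mathbf{P}_i\mathbf{O}_i$. Then $$\mathbb{E}\operatorname{tr}\mathbf{Q}^2=p+\sum_{i\neq j}\frac{p_ip_j}{n-1}$$ and $$\operatorname{Var}(\operatorname{tr}\mathbf{Q}^2)=4\sum_{i\ne j}\frac{p_ip_j(n-1-p_i)(n-1-p_j)}{(n-1)^4}+O\!\left(\frac1n\right),$$ where the sums are over ordered pairs $(i,j)$, $i,j\in\{1,\dots,k\}$, $i\ne j$.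
   Context: $\mathbf{0}_m$ denotes the $m\times m$ zero matrix, so $\mathbf{P}_i$ is the $(n-1)\times(n-1)$ diagonal projection of rank $p_i$. *)

theory Defs
  imports "HOL-Probability.Probability" "HOL-Library.Landau_Symbols"
begin

text \<open>m x m real matrices are encoded as functions nat => nat => real,
  with entries outside the block {..<m} x {..<m} equal to zero.\<close>

definition orthogonal_mat :: "nat \<Rightarrow> (nat \<Rightarrow> nat \<Rightarrow> real) \<Rightarrow> bool" where
  "orthogonal_mat m U \<longleftrightarrow>
     (\<forall>i j. (m \<le> i \<or> m \<le> j) \<longrightarrow> U i j = 0) \<and>
     (\<forall>i<m. \<forall>j<m. (\<Sum>l<m. U l i * U l j) = (if i = j then 1 else 0))"

definition mmult :: "nat \<Rightarrow> (nat \<Rightarrow> nat \<Rightarrow> real) \<Rightarrow> (nat \<Rightarrow> nat \<Rightarrow> real) \<Rightarrow> (nat \<Rightarrow> nat \<Rightarrow> real)" where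
  "mmult m A B = (\<lambda>i j. if i < m \<and> j < m then (\<Sum>l<m. A i l * B l j) else 0)"

text \<open>Haar (probability) measure on the orthogonal group O(m): a probability measure on the
  Borel sets, concentrated on O(m), and invariant under left multiplication by O(m).
  (Such a measure is unique, so this characterises the Haar measure.)\<close>

definition haar_orthogonal :: "nat \<Rightarrow> (nat \<Rightarrow> nat \<Rightarrow> real) measure \<Rightarrow> bool" where
  "haar_orthogonal m \<mu> \<longleftrightarrow>
     prob_space \<mu> \<and> sets \<mu> = sets borel \<and>
     emeasure \<mu> {U. orthogonal_mat m U} = 1 \<and>
     (\<forall>V. orthogonal_mat m V \<longrightarrow> distr \<mu> borel (mmult m V) = \<mu>)"

text \<open>Q = sum_i O_i' P_i O_i with P_i = I_{p_i} (+) 0_{m - p_i}, m = n - 1.\<close>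

definition Qmat :: "nat \<Rightarrow> nat \<Rightarrow> (nat \<Rightarrow> nat) \<Rightarrow> (nat \<Rightarrow> nat \<Rightarrow> nat \<Rightarrow> real) \<Rightarrow> nat \<Rightarrow> nat \<Rightarrow> real" where
  "Qmat k m ps Os = (\<lambda>a b. if a < m \<and> b < m then
      (\<Sum>i<k. \<Sum>l<m. Os i l a * (if l < ps i then 1 else 0) * Os i l b) else 0)"

definition trace_sq :: "nat \<Rightarrow> (nat \<Rightarrow> nat \<Rightarrow> real) \<Rightarrow> real" where
  "trace_sq m Q = (\<Sum>a<m. \<Sum>b<m. Q a b * Q b a)"

end

theory Submission
  imports Defs "Jordan_Normal_Form.Determinant"
begin

text \<open>Write \<open>Y\<^sub>i\<^sub>j = \<parallel>P\<^sub>i O\<^sub>i O\<^sub>j' P\<^sub>j\<parallel>\<^sup>2\<close> (Frobenius norm), so that \<open>tr Q\<^sup>2 = \<Sum>\<^sub>i\<^sub>,\<^sub>j Y\<^sub>i\<^sub>j\<close> and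
  \<open>Y\<^sub>i\<^sub>i = p\<^sub>i\<close>. For \<open>i \<noteq> j\<close>, conditionally on \<open>O\<^sub>j\<close> the matrix \<open>O\<^sub>i O\<^sub>j'\<close> is again Haar
  distributed, so \<open>Y\<^sub>i\<^sub>j\<close> has the law of the squared norm of the upper left \<open>p\<^sub>i \<times> p\<^sub>j\<close>
  corner of a Haar matrix on \<open>O(m)\<close>, \<open>m = n - 1\<close>. Its first two moments reduce to the
  fourth moments \<open>E U\<^sub>a\<^sub>b\<^sup>2 U\<^sub>c\<^sub>d\<^sup>2\<close> and \<open>E U\<^sub>a\<^sub>b U\<^sub>a\<^sub>d U\<^sub>c\<^sub>b U\<^sub>c\<^sub>d\<close>, which are pinned down by
  invariance under row transpositions, invariance under the rotations by \<open>\<pi>/4\<close> in a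
  coordinate plane, and orthonormality of the columns. Overlaps belonging to different
  unordered pairs \<open>{i, j}\<close> are uncorrelated (integrate out an index occurring in only one
  of the pairs), so the variance is exactly
  \<open>\<Sum>\<^sub>i\<^sub>\<noteq>\<^sub>j 4 p\<^sub>i p\<^sub>j (m - p\<^sub>i)(m - p\<^sub>j) / (m\<^sup>2 (m - 1)(m + 2))\<close>,
  which is within \<open>O(1/n)\<close> of the stated main term.\<close>

section \<open>Orthogonal matrices and overlaps\<close>

lemma sum_indicator_prefix:
  fixes f :: "nat \<Rightarrow> real"
  assumes "p \<le> m"
  shows "(\<Sum>l<m. f l * (if l < p then 1 else 0) * g l) = (\<Sum>l<p. f l * g l)"
proof -
  have "(\<Sum>l<m. f l * (if l < p then 1 else 0) * g l) = (\<Sum>l\<in>{..<m} \<inter> {l. l < p}. f l * g l)"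
    by (subst sum.inter_restrict) (auto intro!: sum.cong)
  also have "{..<m} \<inter> {l. l < p} = {..<p}" using assms by auto
  finally show ?thesis .
qed

lemma sum_rotate3: "(\<Sum>a\<in>A. \<Sum>b\<in>B. \<Sum>c\<in>C. g a b c) = (\<Sum>c\<in>C. \<Sum>a\<in>A. \<Sum>b\<in>B. g a b c)"
proof -
  have "(\<Sum>a\<in>A. \<Sum>b\<in>B. \<Sum>c\<in>C. g a b c) = (\<Sum>a\<in>A. \<Sum>c\<in>C. \<Sum>b\<in>B. g a b c)"
    by (intro sum.cong refl sum.swap)
  also have "\<dots> = (\<Sum>c\<in>C. \<Sum>a\<in>A. \<Sum>b\<in>B. g a b c)" by (rule sum.swap)
  finally show ?thesis .
qed

lemma orthogonal_mat_outside: "Defs.orthogonal_mat m U \<Longrightarrow> (m \<le> i \<or> m \<le> j) \<Longrightarrow> U i j = 0"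
  unfolding Defs.orthogonal_mat_def by blast

lemma orthogonal_mat_cols: "Defs.orthogonal_mat m U \<Longrightarrow> i<m \<Longrightarrow> j<m \<Longrightarrow> (\<Sum>l<m. U l i * U l j) = (if i=j then 1 else 0)"
  by (simp add: Defs.orthogonal_mat_def)

text \<open>Orthonormal columns give orthonormal rows: a left inverse of a square matrix is also
  a right inverse.\<close>

lemma orthogonal_mat_rows:
  assumes "Defs.orthogonal_mat m U" "i<m" "j<m"
  shows "(\<Sum>l<m. U i l * U j l) = (if i=j then 1 else 0)"
proof -
  define A where "A = mat m m (\<lambda>(i,j). U i j)"
  have A: "A \<in> carrier_mat m m" "transpose_mat A \<in> carrier_mat m m" unfolding A_def by auto
  have "transpose_mat A * A = 1\<^sub>m m"
  proof (rule eq_matI)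
    fix i j assume ij: "i < dim_row (1\<^sub>m m)" "j < dim_col (1\<^sub>m m)"
    then have "(transpose_mat A * A) $$ (i,j) = (\<Sum>l<m. U l i * U l j)"
      unfolding A_def by (auto simp: scalar_prod_def row_def col_def intro!: sum.reindex_bij_witness[of _ id id])
    also have "\<dots> = 1\<^sub>m m $$ (i,j)" using ij orthogonal_mat_cols[OF assms(1)] by auto
    finally show "(transpose_mat A * A) $$ (i,j) = 1\<^sub>m m $$ (i,j)" .
  qed (use A in auto)
  then have "A * transpose_mat A = 1\<^sub>m m" using mat_mult_left_right_inverse[OF A(2) A(1)] by blast
  then have "(A * transpose_mat A) $$ (i,j) = 1\<^sub>m m $$ (i,j)" by simp
  moreover have "(A * transpose_mat A) $$ (i,j) = (\<Sum>l<m. U i l * U j l)"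
    using assms unfolding A_def by (auto simp: scalar_prod_def row_def col_def intro!: sum.reindex_bij_witness[of _ id id])
  ultimately show ?thesis using assms by auto
qed

definition mtranspose :: "nat \<Rightarrow> (nat \<Rightarrow> nat \<Rightarrow> real) \<Rightarrow> (nat \<Rightarrow> nat \<Rightarrow> real)" where
  "mtranspose m W = (\<lambda>i j. if i < m \<and> j < m then W j i else 0)"

lemma mmult_assoc: "mmult m A (mmult m B C) = mmult m (mmult m A B) C"
proof (intro ext)
  fix i j
  show "mmult m A (mmult m B C) i j = mmult m (mmult m A B) C i j"
  proof (cases "i < m \<and> j < m")
    case True
    have "mmult m A (mmult m B C) i j = (\<Sum>l<m. \<Sum>s<m. A i l * (B l s * C s j))"
      using True unfolding mmult_def by (auto simp: sum_distrib_left intro!: sum.cong)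
    also have "\<dots> = (\<Sum>s<m. \<Sum>l<m. A i l * B l s * C s j)"
      by (subst sum.swap) (simp add: mult_ac)
    also have "\<dots> = mmult m (mmult m A B) C i j"
      using True unfolding mmult_def by (auto simp: sum_distrib_right intro!: sum.cong)
    finally show ?thesis .
  qed (auto simp: mmult_def)
qed

lemma orthogonal_mat_mmult:
  assumes A: "Defs.orthogonal_mat m A" and B: "Defs.orthogonal_mat m B"
  shows "Defs.orthogonal_mat m (mmult m A B)"
  unfolding Defs.orthogonal_mat_def
proof (intro conjI allI impI)
  fix i j assume "m \<le> i \<or> m \<le> j" then show "mmult m A B i j = 0" by (auto simp: mmult_def)
next
  fix i j assume ij: "i < m" "j < m"
  have "(\<Sum>l<m. mmult m A B l i * mmult m A B l j) = (\<Sum>l<m. \<Sum>s<m. \<Sum>t<m. B s i * B t j * (A l s * A l t))"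
    using ij unfolding mmult_def by (auto simp: sum_product mult_ac intro!: sum.cong)
  also have "\<dots> = (\<Sum>s<m. \<Sum>t<m. B s i * B t j * (\<Sum>l<m. A l s * A l t))"
    by (subst sum_rotate3[symmetric]) (simp add: sum_distrib_left)
  also have "\<dots> = (\<Sum>s<m. \<Sum>t<m. B s i * B t j * (if s = t then 1 else 0))"
    using A by (intro sum.cong refl) (simp add: orthogonal_mat_cols)
  also have "\<dots> = (\<Sum>s<m. B s i * B s j)"
    by (simp add: if_distrib cong: if_cong)
  also have "\<dots> = (if i = j then 1 else 0)" using B ij by (simp add: orthogonal_mat_cols)
  finally show "(\<Sum>l<m. mmult m A B l i * mmult m A B l j) = (if i = j then 1 else 0)" .
qed

lemma orthogonal_mat_mtranspose:
  assumes "Defs.orthogonal_mat m W"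
  shows "Defs.orthogonal_mat m (mtranspose m W)"
  unfolding Defs.orthogonal_mat_def
proof (intro conjI allI impI)
  fix i j assume "m \<le> i \<or> m \<le> j" then show "mtranspose m W i j = 0" by (auto simp: mtranspose_def)
next
  fix i j assume ij: "i < m" "j < m"
  have "(\<Sum>l<m. mtranspose m W l i * mtranspose m W l j) = (\<Sum>l<m. W i l * W j l)"
    using ij unfolding mtranspose_def by (auto intro!: sum.cong)
  also have "\<dots> = (if i = j then 1 else 0)" using assms ij by (simp add: orthogonal_mat_rows)
  finally show "(\<Sum>l<m. mtranspose m W l i * mtranspose m W l j) = (if i = j then 1 else 0)" .
qed

lemma orthogonal_mat_entry_sq_le:
  assumes "Defs.orthogonal_mat m U"
  shows "(U i j)^2 \<le> 1"
proof (cases "i < m \<and> j < m")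
  case True
  have "(U i j)^2 \<le> (\<Sum>l<m. (U l j)^2)"
    using True by (intro member_le_sum) auto
  also have "\<dots> = 1" using orthogonal_mat_cols[OF assms, of j j] True by (simp add: power2_eq_square)
  finally show ?thesis .
next
  case False then show ?thesis using orthogonal_mat_outside[OF assms, of i j] by auto
qed

lemma orthogonal_mat_entry_abs_le:
  assumes "Defs.orthogonal_mat m U"
  shows "\<bar>U i j\<bar> \<le> 1"
  using orthogonal_mat_entry_sq_le[OF assms, of i j] by (metis abs_le_square_iff abs_one one_power2)

text \<open>\<open>overlap m p q U W\<close> is the squared Frobenius norm of \<open>P\<^sub>p U W' P\<^sub>q\<close>.\<close>

definition overlap :: "nat \<Rightarrow> nat \<Rightarrow> nat \<Rightarrow> (nat \<Rightarrow> nat \<Rightarrow> real) \<Rightarrow> (nat \<Rightarrow> nat \<Rightarrow> real) \<Rightarrow> real" where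
  "overlap m p q U W = (\<Sum>l<p. \<Sum>l'<q. (\<Sum>a<m. U l a * W l' a)^2)"

definition corner_sq :: "nat \<Rightarrow> nat \<Rightarrow> (nat \<Rightarrow> nat \<Rightarrow> real) \<Rightarrow> real" where
  "corner_sq p q S = (\<Sum>l<p. \<Sum>l'<q. (S l l')^2)"

lemma Qmat_eq_sum:
  assumes "\<forall>i<k. ps i \<le> m" "a < m" "b < m"
  shows "Qmat k m ps Os a b = (\<Sum>i<k. \<Sum>l<ps i. Os i l a * Os i l b)"
  using assms by (simp add: Qmat_def sum_indicator_prefix)

lemma trace_sq_Qmat_eq_overlaps:
  assumes "\<forall>i<k. ps i \<le> m"
  shows "trace_sq m (Qmat k m ps Os) = (\<Sum>i<k. \<Sum>j<k. overlap m (ps i) (ps j) (Os i) (Os j))"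
proof -
  have "trace_sq m (Qmat k m ps Os) = (\<Sum>a<m. \<Sum>b<m. (\<Sum>i<k. \<Sum>l<ps i. Os i l a * Os i l b) * (\<Sum>j<k. \<Sum>l'<ps j. Os j l' b * Os j l' a))"
    unfolding trace_sq_def using assms by (simp add: Qmat_eq_sum)
  also have "\<dots> = (\<Sum>a<m. \<Sum>b<m. \<Sum>i<k. \<Sum>j<k. \<Sum>l'<ps j. \<Sum>l<ps i. Os i l a * (Os i l b * (Os j l' a * Os j l' b)))"
    by (simp add: sum_distrib_left sum_distrib_right mult_ac)
  also have "\<dots> = (\<Sum>i<k. \<Sum>j<k. \<Sum>l'<ps j. \<Sum>l<ps i. \<Sum>a<m. \<Sum>b<m. Os i l a * (Os i l b * (Os j l' a * Os j l' b)))"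
    apply (subst sum_rotate3, rule sum.cong[OF refl])
    apply (subst sum_rotate3, rule sum.cong[OF refl])
    apply (subst sum_rotate3, rule sum.cong[OF refl])
    apply (subst sum_rotate3, rule refl)
    done
  also have "\<dots> = (\<Sum>i<k. \<Sum>j<k. \<Sum>l<ps i. \<Sum>l'<ps j. \<Sum>a<m. \<Sum>b<m. Os i l a * (Os i l b * (Os j l' a * Os j l' b)))"
    by (intro sum.cong refl sum.swap)
  also have "\<dots> = (\<Sum>i<k. \<Sum>j<k. overlap m (ps i) (ps j) (Os i) (Os j))"
    unfolding overlap_def by (simp add: power2_eq_square sum_product mult_ac)
  finally show ?thesis .
qed

lemma overlap_commute: "overlap m p q U W = overlap m q p W U"
  unfolding overlap_def by (subst sum.swap) (simp add: mult.commute)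

lemma overlap_self:
  assumes "Defs.orthogonal_mat m U" "p \<le> m"
  shows "overlap m p p U U = real p"
proof -
  have "overlap m p p U U = (\<Sum>l<p. \<Sum>l'<p. (if l = l' then 1 else 0))"
    unfolding overlap_def using assms by (intro sum.cong refl) (simp add: orthogonal_mat_rows)
  also have "\<dots> = real p" by simp
  finally show ?thesis .
qed

lemma overlap_eq_corner_sq:
  assumes "p \<le> m" "q \<le> m"
  shows "overlap m p q U W = corner_sq p q (mmult m U (mtranspose m W))"
  unfolding overlap_def corner_sq_def using assms by (intro sum.cong refl) (auto simp: mmult_def mtranspose_def intro!: sum.cong)

lemma corner_sq_bounds:
  assumes "Defs.orthogonal_mat m S"
  shows "0 \<le> corner_sq p q S" "corner_sq p q S \<le> real p * real q"
proof -
  show "0 \<le> corner_sq p q S" unfolding corner_sq_def by (intro sum_nonneg) auto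
  have "corner_sq p q S \<le> (\<Sum>l<p. \<Sum>l'<q. 1)"
    unfolding corner_sq_def by (intro sum_mono orthogonal_mat_entry_sq_le[OF assms])
  then show "corner_sq p q S \<le> real p * real q" by simp
qed

lemma overlap_bounds:
  assumes "Defs.orthogonal_mat m U" "Defs.orthogonal_mat m W" "p \<le> m" "q \<le> m"
  shows "0 \<le> overlap m p q U W" "overlap m p q U W \<le> real p * real q"
  using corner_sq_bounds[OF orthogonal_mat_mmult[OF assms(1) orthogonal_mat_mtranspose[OF assms(2)]]] overlap_eq_corner_sq[OF assms(3,4)] by auto

lemma overlap_centered_bound:
  assumes "Defs.orthogonal_mat m U" "Defs.orthogonal_mat m W" "p \<le> m" "q \<le> m"
  shows "\<bar>overlap m p q U W - real p * real q / real m\<bar> \<le> 2 * real p * real q"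
proof -
  have "real p * real q / real m \<le> real p * real q / 1" if "m \<noteq> 0"
    using that by (intro divide_left_mono) auto
  then have "real p * real q / real m \<le> real p * real q" by (cases "m = 0") auto
  moreover have "0 \<le> real p * real q / real m" by simp
  ultimately show ?thesis using overlap_bounds[OF assms] unfolding abs_le_iff by linarith
qed

section \<open>Measurability\<close>

lemma measurable_entry[measurable]: "(\<lambda>U::nat \<Rightarrow> nat \<Rightarrow> real. U a b) \<in> borel_measurable borel"
proof -
  have "(\<lambda>U::nat \<Rightarrow> nat \<Rightarrow> real. U a) \<in> measurable borel borel" by (rule measurable_product_coordinates)
  moreover have "(\<lambda>x::nat \<Rightarrow> real. x b) \<in> borel_measurable borel" by (rule measurable_product_coordinates)
  ultimately show ?thesis using measurable_comp[of "\<lambda>U::nat \<Rightarrow> nat \<Rightarrow> real. U a" borel borel "\<lambda>x. x b" borel]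
    by (simp add: comp_def)
qed

lemma measurable_matrixI:
  fixes f :: "'b \<Rightarrow> nat \<Rightarrow> nat \<Rightarrow> real"
  assumes "\<And>a b. (\<lambda>x. f x a b) \<in> borel_measurable N"
  shows "f \<in> measurable N borel"
proof (rule measurable_coordinatewise_then_product)
  fix a show "(\<lambda>x. f x a) \<in> borel_measurable N"
    by (rule measurable_coordinatewise_then_product) (rule assms)
qed

lemma measurable_mmult_left[measurable]: "mmult m V \<in> measurable borel borel"
  by (rule measurable_matrixI) (simp add: mmult_def)

lemma measurable_mmult_right[measurable]: "(\<lambda>U. mmult m U W) \<in> measurable borel borel"
  by (rule measurable_matrixI) (simp add: mmult_def)

lemma pred_orthogonal_mat[measurable]: "Measurable.pred borel (Defs.orthogonal_mat m)"
  unfolding Defs.orthogonal_mat_def by measurable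

lemma orthogonal_mat_sets[measurable]: "{U. Defs.orthogonal_mat m U} \<in> sets borel"
  using pred_orthogonal_mat[of m] by (simp add: pred_def)

lemma measurable_overlap[measurable]:
  assumes [measurable]: "f \<in> measurable N borel" "g \<in> measurable N borel"
  shows "(\<lambda>x. overlap m p q (f x) (g x)) \<in> borel_measurable N"
  unfolding overlap_def by measurable

lemma measurable_fst_component:
  assumes "v \<in> B"
  shows "(\<lambda>x. fst x v) \<in> measurable (PiM B (\<lambda>_. borel) \<Otimes>\<^sub>M N) (borel :: (nat \<Rightarrow> nat \<Rightarrow> real) measure)"
  using measurable_comp[OF measurable_fst measurable_component_singleton[OF assms]] by (simp add: comp_def)

section \<open>Haar measure on the orthogonal group\<close>

lemma haar_orthogonal_prob_space: "haar_orthogonal m \<mu> \<Longrightarrow> prob_space \<mu>"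
  by (simp add: haar_orthogonal_def)

lemma haar_orthogonal_sets: "haar_orthogonal m \<mu> \<Longrightarrow> sets \<mu> = sets borel"
  by (simp add: haar_orthogonal_def)

lemma haar_orthogonal_space: "haar_orthogonal m \<mu> \<Longrightarrow> space \<mu> = UNIV"
  using sets_eq_imp_space_eq[OF haar_orthogonal_sets] by auto

lemma haar_orthogonal_measurable:
  assumes "haar_orthogonal m \<mu>" "g \<in> measurable borel N"
  shows "g \<in> measurable \<mu> N"
  using assms measurable_cong_sets[OF haar_orthogonal_sets[OF assms(1)] refl] by blast

lemma haar_orthogonal_AE:
  assumes "haar_orthogonal m \<mu>"
  shows "AE U in \<mu>. Defs.orthogonal_mat m U"
proof -
  interpret prob_space \<mu> using haar_orthogonal_prob_space[OF assms] .
  have "{x \<in> space \<mu>. Defs.orthogonal_mat m x} = {U. Defs.orthogonal_mat m U}"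
    using haar_orthogonal_space[OF assms] by auto
  then show ?thesis using assms orthogonal_mat_sets[of m] haar_orthogonal_sets[OF assms]
    by (intro AE_I_eq_1) (auto simp: haar_orthogonal_def)
qed

lemma haar_orthogonal_integral_mmult:
  fixes g :: "(nat \<Rightarrow> nat \<Rightarrow> real) \<Rightarrow> real"
  assumes "haar_orthogonal m \<mu>" "Defs.orthogonal_mat m V" "g \<in> borel_measurable borel"
  shows "(\<integral>U. g (mmult m V U) \<partial>\<mu>) = (\<integral>U. g U \<partial>\<mu>)"
proof -
  have "(\<integral>U. g (mmult m V U) \<partial>\<mu>) = integral\<^sup>L (distr \<mu> borel (mmult m V)) g"
    using integral_distr[OF haar_orthogonal_measurable[OF assms(1) measurable_mmult_left] assms(3)] by simp
  also have "distr \<mu> borel (mmult m V) = \<mu>" using assms by (simp add: haar_orthogonal_def)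
  finally show ?thesis .
qed

lemma haar_orthogonal_integrable:
  fixes g :: "(nat \<Rightarrow> nat \<Rightarrow> real) \<Rightarrow> real"
  assumes "haar_orthogonal m \<mu>" "g \<in> borel_measurable borel"
    "\<And>U. Defs.orthogonal_mat m U \<Longrightarrow> \<bar>g U\<bar> \<le> B"
  shows "integrable \<mu> g"
proof -
  interpret prob_space \<mu> using haar_orthogonal_prob_space[OF assms(1)] .
  show ?thesis
    by (rule integrable_const_bound[where B=B])
       (use haar_orthogonal_AE[OF assms(1)] assms(3) in \<open>auto elim!: eventually_mono intro: haar_orthogonal_measurable[OF assms(1) assms(2)]\<close>)
qed

lemma haar_orthogonal_mmult_right:
  assumes h: "haar_orthogonal m \<mu>" and W: "Defs.orthogonal_mat m W"
  shows "haar_orthogonal m (distr \<mu> borel (\<lambda>U. mmult m U W))"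
proof -
  interpret prob_space \<mu> using haar_orthogonal_prob_space[OF h] .
  have mW: "(\<lambda>U. mmult m U W) \<in> measurable \<mu> borel" by (rule haar_orthogonal_measurable[OF h measurable_mmult_right])
  let ?\<nu> = "distr \<mu> borel (\<lambda>U. mmult m U W)"
  interpret nu: prob_space ?\<nu> by (rule prob_space_distr[OF mW])
  have "AE U in ?\<nu>. Defs.orthogonal_mat m U"
    by (subst AE_distr_iff[OF mW]) (use haar_orthogonal_AE[OF h] W in \<open>auto elim!: eventually_mono intro: orthogonal_mat_mmult\<close>)
  then have e: "emeasure ?\<nu> {U. Defs.orthogonal_mat m U} = 1"
    using nu.AE_iff_emeasure_eq_1[of "Defs.orthogonal_mat m"] by simp
  have invariant: "distr ?\<nu> borel (mmult m V) = ?\<nu>" if V: "Defs.orthogonal_mat m V" for V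
  proof -
    have "distr ?\<nu> borel (mmult m V) = distr \<mu> borel (mmult m V \<circ> (\<lambda>U. mmult m U W))"
      by (rule distr_distr[OF measurable_mmult_left mW])
    also have "mmult m V \<circ> (\<lambda>U. mmult m U W) = (\<lambda>U. mmult m U W) \<circ> mmult m V"
      by (auto simp: mmult_assoc)
    also have "distr \<mu> borel \<dots> = distr (distr \<mu> borel (mmult m V)) borel (\<lambda>U. mmult m U W)"
      by (rule distr_distr[symmetric, OF measurable_mmult_right haar_orthogonal_measurable[OF h measurable_mmult_left]])
    also have "distr \<mu> borel (mmult m V) = \<mu>" using h V by (simp add: haar_orthogonal_def)
    finally show ?thesis .
  qed
  show ?thesis unfolding haar_orthogonal_def using e invariant nu.prob_space_axioms by simp
qed

section \<open>Fourth moments of a Haar matrix\<close>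

definition plane_mat :: "nat \<Rightarrow> nat \<Rightarrow> nat \<Rightarrow> real \<Rightarrow> real \<Rightarrow> real \<Rightarrow> real \<Rightarrow> nat \<Rightarrow> nat \<Rightarrow> real" where
  "plane_mat m a c \<alpha> \<beta> \<gamma> \<delta> = (\<lambda>l i. if l < m \<and> i < m then
     (if i = a then (if l = a then \<alpha> else if l = c then \<gamma> else 0)
      else if i = c then (if l = a then \<beta> else if l = c then \<delta> else 0)
      else (if l = i then 1 else 0)) else 0)"

lemma sum_remove2:
  fixes f :: "nat \<Rightarrow> real"
  assumes "a < m" "c < m" "a \<noteq> c"
  shows "(\<Sum>l<m. f l) = f a + f c + (\<Sum>l\<in>{..<m} - {a, c}. f l)"
proof -
  have "{..<m} = insert a (insert c ({..<m} - {a, c}))" using assms by auto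
  then have "(\<Sum>l<m. f l) = (\<Sum>l\<in>insert a (insert c ({..<m} - {a, c})). f l)" by simp
  also have "\<dots> = f a + f c + (\<Sum>l\<in>{..<m} - {a, c}. f l)"
    using assms by (simp add: sum.insert)
  finally show ?thesis .
qed

lemma mmult_plane_mat:
  assumes "a < m" "c < m" "a \<noteq> c" "r < m" "j < m"
  shows "mmult m (plane_mat m a c \<alpha> \<beta> \<gamma> \<delta>) U r j =
    (if r = a then \<alpha> * U a j + \<beta> * U c j else if r = c then \<gamma> * U a j + \<delta> * U c j else U r j)"
proof -
  have "mmult m (plane_mat m a c \<alpha> \<beta> \<gamma> \<delta>) U r j = (\<Sum>i<m. plane_mat m a c \<alpha> \<beta> \<gamma> \<delta> r i * U i j)"
    using assms by (simp add: mmult_def)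
  also have "\<dots> = plane_mat m a c \<alpha> \<beta> \<gamma> \<delta> r a * U a j + plane_mat m a c \<alpha> \<beta> \<gamma> \<delta> r c * U c j
      + (\<Sum>i\<in>{..<m} - {a, c}. plane_mat m a c \<alpha> \<beta> \<gamma> \<delta> r i * U i j)"
    by (rule sum_remove2[OF assms(1-3)])
  also have "(\<Sum>i\<in>{..<m} - {a, c}. plane_mat m a c \<alpha> \<beta> \<gamma> \<delta> r i * U i j) = (\<Sum>i\<in>{..<m} - {a, c}. (if r = i then U i j else 0))"
    by (rule sum.cong) (use assms in \<open>auto simp: plane_mat_def\<close>)
  also have "(\<Sum>i\<in>{..<m} - {a, c}. (if r = i then U i j else 0)) = (if r \<noteq> a \<and> r \<noteq> c then U r j else 0)"
    using assms by (simp add: sum.delta)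
  finally show ?thesis using assms by (auto simp: plane_mat_def)
qed

lemma orthogonal_plane_mat:
  assumes "a < m" "c < m" "a \<noteq> c"
    and "\<alpha>^2 + \<gamma>^2 = 1" "\<beta>^2 + \<delta>^2 = 1" "\<alpha> * \<beta> + \<gamma> * \<delta> = 0"
  shows "Defs.orthogonal_mat m (plane_mat m a c \<alpha> \<beta> \<gamma> \<delta>)"
  unfolding Defs.orthogonal_mat_def
proof (intro conjI allI impI)
  fix i j assume "m \<le> i \<or> m \<le> j" then show "plane_mat m a c \<alpha> \<beta> \<gamma> \<delta> i j = 0" by (auto simp: plane_mat_def)
next
  fix i j assume ij: "i < m" "j < m"
  let ?V = "plane_mat m a c \<alpha> \<beta> \<gamma> \<delta>"
  have "(\<Sum>l<m. ?V l i * ?V l j) = ?V a i * ?V a j + ?V c i * ?V c j + (\<Sum>l\<in>{..<m} - {a, c}. ?V l i * ?V l j)"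
    by (rule sum_remove2[OF assms(1-3)])
  also have "(\<Sum>l\<in>{..<m} - {a, c}. ?V l i * ?V l j) = (\<Sum>l\<in>{..<m} - {a, c}. (if l = i then (if l = j then 1 else 0) else 0))"
    by (rule sum.cong) (use ij in \<open>auto simp: plane_mat_def\<close>)
  also have "(\<Sum>l\<in>{..<m} - {a, c}. (if l = i then (if l = j then 1 else 0) else 0)) = (if i = j \<and> i \<noteq> a \<and> i \<noteq> c then 1 else (0::real))"
    using ij by (simp add: sum.delta')
  finally show "(\<Sum>l<m. ?V l i * ?V l j) = (if i = j then 1 else 0)"
    using assms ij by (auto simp: plane_mat_def power2_eq_square algebra_simps)
qed

definition swap_idx :: "nat \<Rightarrow> nat \<Rightarrow> nat \<Rightarrow> nat" where
  "swap_idx r s i = (if i = r then s else if i = s then r else i)"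

lemma mmult_swap_mat:
  assumes "r < m" "s < m" "r \<noteq> s"
  shows "mmult m (plane_mat m r s 0 1 1 0) U = (\<lambda>i j. if i < m \<and> j < m then U (swap_idx r s i) j else 0)"
proof (intro ext)
  fix i j show "mmult m (plane_mat m r s 0 1 1 0) U i j = (if i < m \<and> j < m then U (swap_idx r s i) j else 0)"
    using mmult_plane_mat[OF assms, of i j 0 1 1 0 U] by (auto simp: swap_idx_def mmult_def)
qed

lemma swap_invariant_pair_const:
  assumes F: "\<And>r s a c. r < m \<Longrightarrow> s < m \<Longrightarrow> a < m \<Longrightarrow> c < m \<Longrightarrow> F (swap_idx r s a) (swap_idx r s c) = F a c"
    and lt: "a < m" "c < m" "a' < m" "c' < m" and ne: "a \<noteq> c" "a' \<noteq> c'"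
  shows "F a c = F a' c'"
proof (cases "c' = a")
  case False
  have "F a c = F (swap_idx c c' a) (swap_idx c c' c)" using F[of c c' a c] lt by simp
  also have "\<dots> = F a c'" using False ne by (simp add: swap_idx_def)
  also have "\<dots> = F (swap_idx a a' a) (swap_idx a a' c')" using F[of a a' a c'] lt by simp
  also have "\<dots> = F a' c'" using False ne by (simp add: swap_idx_def)
  finally show ?thesis .
next
  case True
  show ?thesis
  proof (cases "c = a'")
    case False
    have "F a c = F (swap_idx a a' a) (swap_idx a a' c)" using F[of a a' a c] lt by simp
    also have "\<dots> = F a' c" using False ne by (simp add: swap_idx_def)
    also have "\<dots> = F (swap_idx c a a') (swap_idx c a c)" using F[of c a a' c] lt by simp
    also have "\<dots> = F a' c'" using False ne True by (auto simp: swap_idx_def)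
    finally show ?thesis .
  next
    case c: True
    have "F a c = F (swap_idx a c a) (swap_idx a c c)" using F[of a c a c] lt by simp
    also have "\<dots> = F a' c'" using c True ne by (auto simp: swap_idx_def)
    finally show ?thesis .
  qed
qed

lemma sum_const_off:
  fixes f :: "nat \<Rightarrow> real"
  assumes "a < m" "\<And>c. c < m \<Longrightarrow> c \<noteq> a \<Longrightarrow> f c = K"
  shows "(\<Sum>c<m. f c) = f a + (real m - 1) * K"
proof -
  have "(\<Sum>c<m. f c) = f a + (\<Sum>c\<in>{..<m} - {a}. f c)"
    using assms(1) by (simp add: sum.remove)
  also have "(\<Sum>c\<in>{..<m} - {a}. f c) = (\<Sum>c\<in>{..<m} - {a}. K)"
    using assms(2) by (intro sum.cong) auto
  also have "\<dots> = (real m - 1) * K" using assms(1) by (simp add: of_nat_diff)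
  finally show ?thesis .
qed

text \<open>\<open>hmom m (a = c) (b = d)\<close> is the value of \<open>E U\<^sub>a\<^sub>b\<^sup>2 U\<^sub>c\<^sub>d\<^sup>2\<close> for a Haar matrix \<open>U\<close> on \<open>O(m)\<close>.\<close>

definition hmom :: "nat \<Rightarrow> bool \<Rightarrow> bool \<Rightarrow> real" where
  "hmom m r c = (if r then (if c then 3 / (real m * (real m + 2)) else 1 / (real m * (real m + 2)))
     else (if c then 1 / (real m * (real m + 2)) else (real m + 1) / ((real m - 1) * real m * (real m + 2))))"

lemma sum_sum_diag_offdiag:
  fixes A B :: real
  shows "(\<Sum>x<n. \<Sum>y<n. (if x = y then A else B)) = real n * A + real n * (real n - 1) * B"
proof -
  have "(\<Sum>x<n. \<Sum>y<n. (if x = y then A else B)) = (\<Sum>x<n. A + (real n - 1) * B)"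
  proof (rule sum.cong[OF refl])
    fix x assume "x \<in> {..<n}"
    then show "(\<Sum>y<n. (if x = y then A else B)) = A + (real n - 1) * B"
      using sum_const_off[of x n "\<lambda>y. if x = y then A else B" B] by auto
  qed
  also have "\<dots> = real n * A + real n * (real n - 1) * B" by (simp add: algebra_simps)
  finally show ?thesis .
qed

definition corner_var :: "nat \<Rightarrow> nat \<Rightarrow> nat \<Rightarrow> real" where
  "corner_var m p q = 2 * real p * real q * (real m - real p) * (real m - real q) / ((real m)^2 * (real m - 1) * (real m + 2))"

lemma sum_sum_hmom: "(\<Sum>x<n. \<Sum>y<n. hmom m r (x = y)) = real n * hmom m r True + real n * (real n - 1) * hmom m r False"
proof -
  have "(\<Sum>x<n. \<Sum>y<n. hmom m r (x = y)) = (\<Sum>x<n. \<Sum>y<n. (if x = y then hmom m r True else hmom m r False))"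
    by (intro sum.cong refl) auto
  then show ?thesis by (simp add: sum_sum_diag_offdiag)
qed

lemma hmom_corner_identity:
  assumes "2 \<le> m"
  shows "real p * (real q * hmom m True True + real q * (real q - 1) * hmom m True False)
    + real p * (real p - 1) * (real q * hmom m False True + real q * (real q - 1) * hmom m False False)
    = (real p * real q / real m)^2 + corner_var m p q"
proof -
  have "real m - 1 \<noteq> 0" "real m \<noteq> 0" "real m + 2 \<noteq> 0" using assms by auto
  then show ?thesis unfolding hmom_def corner_var_def
    by (simp add: divide_simps power2_eq_square) (simp add: algebra_simps)
qed

lemma hmom_unique_solution:
  fixes A B G :: real
  assumes m2: "2 \<le> m" and col: "A + (real m - 1) * B = 1 / real m" and rot: "2 * A = 2 * B + 4 * G"
    and cross: "if e then G = B else A + (real m - 1) * G = 0"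
  shows "A = hmom m True e \<and> B = hmom m False e"
proof -
  have mr: "real m \<ge> 2" using m2 by simp
  show ?thesis
  proof (cases e)
    case True
    then have "A = 3 * B" using rot cross by simp
    then have "B * (real m * (real m + 2)) = 1" using col mr by (simp add: field_simps)
    then show ?thesis using True \<open>A = 3 * B\<close> mr by (simp add: hmom_def eq_divide_eq)
  next
    case False
    have B: "B = A - 2 * G" using rot by simp
    have "(real m - 1) * B = (real m - 1) * A - 2 * ((real m - 1) * G)"
      unfolding B by (simp add: algebra_simps)
    also have "\<dots> = A * (real m + 1)" using cross False by (simp add: algebra_simps)
    finally have "(real m - 1) * B = A * (real m + 1)" .
    then have "A * (real m * (real m + 2)) = 1" using col mr by (simp add: field_simps)
    then have A: "A = 1 / (real m * (real m + 2))" using mr by (simp add: eq_divide_eq)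
    have "B = A * (real m + 1) / (real m - 1)"
      using \<open>(real m - 1) * B = A * (real m + 1)\<close> mr by (simp add: eq_divide_eq mult.commute)
    then show ?thesis using False A by (simp add: hmom_def)
  qed
qed

lemma corner_var_approx:
  assumes m2: "2 \<le> m" and pq: "p \<le> m" "q \<le> m"
  shows "\<bar>2 * corner_var m p q - 4 * (real p * real q * (real m - real p) * (real m - real q) / (real m)^4)\<bar> \<le> 4 / real m"
proof -
  define x where "x = real m"
  define X where "X = real p * real q * (real m - real p) * (real m - real q)"
  have x2: "x \<ge> 2" using m2 unfolding x_def by simp
  have a: "0 \<le> real p" "real p \<le> x" "0 \<le> real q" "real q \<le> x" using pq unfolding x_def by auto
  have b: "0 \<le> x - real p" "x - real p \<le> x" "0 \<le> x - real q" "x - real q \<le> x" using a by auto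
  have X0: "0 \<le> X" unfolding X_def x_def[symmetric] using a b by simp
  have X1: "X \<le> x * x * x * x" unfolding X_def x_def[symmetric]
    using a b by (intro mult_mono) (auto intro: mult_nonneg_nonneg)
  define H where "H = 1 / (x^4 * (x - 1) * (x + 2))"
  have dpos: "x^4 * (x - 1) * (x + 2) > 0" using x2 by simp
  have H0: "H > 0" unfolding H_def using dpos by simp
  have e1: "2 * corner_var m p q = 4 * X * (x * x) * H"
  proof -
    have "2 * corner_var m p q = 4 * X / (x^2 * (x - 1) * (x + 2))"
      unfolding corner_var_def X_def x_def by (simp add: algebra_simps)
    also have "\<dots> = 4 * X * (x * x) / (x^4 * (x - 1) * (x + 2))"
      using x2 by (simp add: power2_eq_square power4_eq_xxxx)
    finally show ?thesis unfolding H_def by simp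
  qed
  have e2: "4 * (X / x^4) = 4 * X * ((x - 1) * (x + 2)) * H"
    unfolding H_def using x2 by (simp add: power4_eq_xxxx)
  have diff: "4 * (X / x^4) - 2 * corner_var m p q = 4 * X * (x - 2) * H"
    unfolding e1 e2 by (simp add: algebra_simps)
  have d0: "0 \<le> 4 * X * (x - 2) * H" using X0 x2 H0 by simp
  have "4 * X * (x - 2) * H \<le> 4 * (x * x * x * x) * (x - 2) * H"
    using X1 x2 H0 by (intro mult_right_mono) auto
  also have "\<dots> = 4 * (x - 2) / ((x - 1) * (x + 2))"
    unfolding H_def using x2 by (simp add: power4_eq_xxxx)
  also have "\<dots> \<le> 4 / x"
    using x2 by (simp add: divide_simps) (simp add: algebra_simps)
  finally have "4 * X * (x - 2) * H \<le> 4 / x" .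
  moreover have "0 \<le> 4 / x" using x2 by simp
  ultimately have "\<bar>2 * corner_var m p q - 4 * (X / x^4)\<bar> \<le> 4 / x" using diff d0 unfolding abs_le_iff by linarith
  then show ?thesis unfolding X_def x_def .
qed

locale haar_orth =
  fixes m :: nat and \<mu> :: "(nat \<Rightarrow> nat \<Rightarrow> real) measure"
  assumes haar: "haar_orthogonal m \<mu>"
begin

sublocale prob_space \<mu> using haar_orthogonal_prob_space[OF haar] .

lemma sets_eq_borel[measurable_cong]: "sets \<mu> = sets borel"
  by (rule haar_orthogonal_sets[OF haar])

lemma measurable_swap_rows[measurable]: "(\<lambda>U::nat \<Rightarrow> nat \<Rightarrow> real. (\<lambda>i j. if i < m \<and> j < m then U (swap_idx r s i) j else 0)) \<in> measurable borel borel"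
  by (rule measurable_matrixI) simp

lemma AE_orthogonal: "AE U in \<mu>. Defs.orthogonal_mat m U"
  by (rule haar_orthogonal_AE[OF haar])

lemma integrable_entries2[simp, intro]: "integrable \<mu> (\<lambda>U. U a b * U c d)"
proof (rule haar_orthogonal_integrable[OF haar, where B=1])
  fix U assume U: "Defs.orthogonal_mat m U"
  show "\<bar>U a b * U c d\<bar> \<le> 1" unfolding abs_mult
    using orthogonal_mat_entry_abs_le[OF U, of a b] orthogonal_mat_entry_abs_le[OF U, of c d] by (intro mult_le_one) auto
qed simp

lemma integrable_entries4[simp, intro]: "integrable \<mu> (\<lambda>U. U a b * U c d * U e f * U g h)"
proof (rule haar_orthogonal_integrable[OF haar, where B=1])
  fix U assume U: "Defs.orthogonal_mat m U"
  show "\<bar>U a b * U c d * U e f * U g h\<bar> \<le> 1" unfolding abs_mult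
    using orthogonal_mat_entry_abs_le[OF U, of a b] orthogonal_mat_entry_abs_le[OF U, of c d] orthogonal_mat_entry_abs_le[OF U, of e f] orthogonal_mat_entry_abs_le[OF U, of g h]
    by (intro mult_le_one) auto
qed simp

lemma integral_mmult_left:
  fixes g :: "(nat \<Rightarrow> nat \<Rightarrow> real) \<Rightarrow> real"
  assumes "Defs.orthogonal_mat m V" "g \<in> borel_measurable borel"
  shows "(\<integral>U. g (mmult m V U) \<partial>\<mu>) = (\<integral>U. g U \<partial>\<mu>)"
  by (rule haar_orthogonal_integral_mmult[OF haar assms])

lemma integral_swap_rows:
  fixes g :: "(nat \<Rightarrow> nat \<Rightarrow> real) \<Rightarrow> real"
  assumes "r < m" "s < m" "g \<in> borel_measurable borel"
  shows "(\<integral>U. g (\<lambda>i j. if i < m \<and> j < m then U (swap_idx r s i) j else 0) \<partial>\<mu>) = (\<integral>U. g U \<partial>\<mu>)"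
proof (cases "r = s")
  case True
  have "(\<lambda>i j. if i < m \<and> j < m then U (swap_idx r s i) j else 0) = U" if "Defs.orthogonal_mat m U" for U
    using True orthogonal_mat_outside[OF that] by (auto simp: swap_idx_def fun_eq_iff)
  then show ?thesis using AE_orthogonal assms(3) by (intro integral_cong_AE) (auto elim!: eventually_mono)
next
  case False
  have o: "Defs.orthogonal_mat m (plane_mat m r s 0 1 1 0)" using assms False by (intro orthogonal_plane_mat) auto
  show ?thesis using integral_mmult_left[OF o assms(3)] mmult_swap_mat[OF assms(1,2) False] by simp
qed

lemma entry_sq_integral_swap:
  assumes "a < m" "c < m" "b < m"
  shows "(\<integral>U. (U c b)^2 \<partial>\<mu>) = (\<integral>U. (U a b)^2 \<partial>\<mu>)"
  using integral_swap_rows[OF assms(1,2), of "\<lambda>U. (U a b)^2"] assms by (simp add: swap_idx_def)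

lemma entry_sq_integral:
  assumes "a < m" "b < m"
  shows "(\<integral>U. (U a b)^2 \<partial>\<mu>) = 1 / real m"
proof -
  have "(\<integral>U. (\<Sum>c<m. (U c b)^2) \<partial>\<mu>) = (\<integral>U. 1 \<partial>\<mu>)"
    using AE_orthogonal assms by (intro integral_cong_AE) (auto elim!: eventually_mono simp: orthogonal_mat_cols power2_eq_square)
  also have "\<dots> = 1" by (simp add: prob_space)
  finally have "1 = (\<Sum>c<m. (\<integral>U. (U c b)^2 \<partial>\<mu>))" by (simp add: power2_eq_square)
  also have "\<dots> = (\<Sum>c<m. (\<integral>U. (U a b)^2 \<partial>\<mu>))" using assms by (intro sum.cong refl entry_sq_integral_swap) auto
  finally show ?thesis using assms by (simp add: field_simps)
qed

definition sqmom where "sqmom a b c d = (\<integral>U. U a b * U a b * U c d * U c d \<partial>\<mu>)"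
definition crossmom where "crossmom a c b d = (\<integral>U. U a b * U a d * U c b * U c d \<partial>\<mu>)"

lemma sqmom_swap:
  assumes "r < m" "s < m" "a < m" "b < m" "c < m" "d < m"
  shows "sqmom (swap_idx r s a) b (swap_idx r s c) d = sqmom a b c d"
  using integral_swap_rows[OF assms(1,2), of "\<lambda>U. U a b * U a b * U c d * U c d"] assms
  unfolding sqmom_def by simp

lemma crossmom_swap:
  assumes "r < m" "s < m" "a < m" "b < m" "c < m" "d < m"
  shows "crossmom (swap_idx r s a) (swap_idx r s c) b d = crossmom a c b d"
  using integral_swap_rows[OF assms(1,2), of "\<lambda>U. U a b * U a d * U c b * U c d"] assms
  unfolding crossmom_def by simp

lemma sqmom_same_row:
  assumes "a < m" "a' < m" "b < m" "d < m"
  shows "sqmom a b a d = sqmom a' b a' d"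
  using sqmom_swap[of a a' a b a d] assms by (simp add: swap_idx_def)

lemma sqmom_distinct_rows:
  assumes "a < m" "c < m" "a' < m" "c' < m" "a \<noteq> c" "a' \<noteq> c'" "b < m" "d < m"
  shows "sqmom a b c d = sqmom a' b c' d"
  using swap_invariant_pair_const[where F="\<lambda>a c. sqmom a b c d", OF _ assms(1-6)] sqmom_swap assms by blast

lemma crossmom_distinct_rows:
  assumes "a < m" "c < m" "a' < m" "c' < m" "a \<noteq> c" "a' \<noteq> c'" "b < m" "d < m"
  shows "crossmom a c b d = crossmom a' c' b d"
  using swap_invariant_pair_const[where F="\<lambda>a c. crossmom a c b d", OF _ assms(1-6)] crossmom_swap assms by blast

lemma sum_sqmom:
  assumes "a < m" "b < m" "d < m"
  shows "(\<Sum>c<m. sqmom a b c d) = 1 / real m"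
proof -
  have "(\<Sum>c<m. sqmom a b c d) = (\<integral>U. (\<Sum>c<m. U a b * U a b * U c d * U c d) \<partial>\<mu>)"
    unfolding sqmom_def by (subst Bochner_Integration.integral_sum) auto
  also have "\<dots> = (\<integral>U. (U a b)^2 \<partial>\<mu>)"
  proof (intro integral_cong_AE)
    show "AE U in \<mu>. (\<Sum>c<m. U a b * U a b * U c d * U c d) = (U a b)^2"
      using AE_orthogonal
    proof eventually_elim
      case (elim U)
      have "(\<Sum>c<m. U a b * U a b * U c d * U c d) = U a b * U a b * (\<Sum>c<m. U c d * U c d)"
        by (simp add: sum_distrib_left mult_ac)
      also have "\<dots> = (U a b)^2" using elim assms by (simp add: orthogonal_mat_cols power2_eq_square)
      finally show ?case .
    qed
  qed simp_all
  also have "\<dots> = 1 / real m" using entry_sq_integral assms by simp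
  finally show ?thesis .
qed

lemma sum_crossmom:
  assumes "a < m" "b < m" "d < m" "b \<noteq> d"
  shows "(\<Sum>c<m. crossmom a c b d) = 0"
proof -
  have "(\<Sum>c<m. crossmom a c b d) = (\<integral>U. (\<Sum>c<m. U a b * U a d * U c b * U c d) \<partial>\<mu>)"
    unfolding crossmom_def by (subst Bochner_Integration.integral_sum) auto
  also have "\<dots> = (\<integral>U. 0 \<partial>\<mu>)"
  proof (intro integral_cong_AE)
    show "AE U in \<mu>. (\<Sum>c<m. U a b * U a d * U c b * U c d) = 0"
      using AE_orthogonal
    proof eventually_elim
      case (elim U)
      have "(\<Sum>c<m. U a b * U a d * U c b * U c d) = U a b * U a d * (\<Sum>c<m. U c b * U c d)"
        by (simp add: sum_distrib_left mult_ac)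
      also have "\<dots> = 0" using elim assms by (simp add: orthogonal_mat_cols)
      finally show ?case .
    qed
  qed simp_all
  also have "\<dots> = 0" by simp
  finally show ?thesis .
qed

lemma integrable_mmult_left:
  fixes g :: "(nat \<Rightarrow> nat \<Rightarrow> real) \<Rightarrow> real"
  assumes "Defs.orthogonal_mat m V" "g \<in> borel_measurable borel" "integrable \<mu> g"
  shows "integrable \<mu> (\<lambda>U. g (mmult m V U))"
proof -
  have "integrable (distr \<mu> borel (mmult m V)) g" using assms haar by (simp add: haar_orthogonal_def)
  then show ?thesis using integrable_distr_eq[OF haar_orthogonal_measurable[OF haar measurable_mmult_left] assms(2)] by simp
qed

text \<open>Invariance under the rotations by \<open>\<pm>\<pi>/4\<close> in the plane of the rows \<open>a\<close> and \<open>c\<close>.\<close>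

lemma rotation_relation:
  assumes "a < m" "c < m" "a \<noteq> c" "b < m" "d < m"
  shows "4 * sqmom a b a d = sqmom a b a d + sqmom a b c d + sqmom c b a d + sqmom c b c d + 4 * crossmom a c b d"
proof -
  define s where "s = sqrt (1/2)"
  have ss: "s * s = 1/2" unfolding s_def by (simp add: real_sqrt_mult[symmetric])
  have ss2: "s^2 = 1/2" using ss by (simp add: power2_eq_square)
  let ?g = "\<lambda>U::nat \<Rightarrow> nat \<Rightarrow> real. U a b * U a b * U a d * U a d"
  have gm: "?g \<in> borel_measurable borel" by simp
  have o1: "Defs.orthogonal_mat m (plane_mat m a c s s (-s) s)" using assms ss2 by (intro orthogonal_plane_mat) auto
  have o2: "Defs.orthogonal_mat m (plane_mat m a c s (-s) s s)" using assms ss2 by (intro orthogonal_plane_mat) auto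
  define f1 where "f1 = (\<lambda>U::nat \<Rightarrow> nat \<Rightarrow> real. (s * U a b + s * U c b) * (s * U a b + s * U c b) * (s * U a d + s * U c d) * (s * U a d + s * U c d))"
  define f2 where "f2 = (\<lambda>U::nat \<Rightarrow> nat \<Rightarrow> real. (s * U a b + - s * U c b) * (s * U a b + - s * U c b) * (s * U a d + - s * U c d) * (s * U a d + - s * U c d))"
  have e1: "(\<lambda>U. ?g (mmult m (plane_mat m a c s s (-s) s) U)) = f1"
    unfolding f1_def using assms by (simp add: mmult_plane_mat)
  have e2: "(\<lambda>U. ?g (mmult m (plane_mat m a c s (-s) s s) U)) = f2"
    unfolding f2_def using assms by (simp add: mmult_plane_mat)
  have i1: "integrable \<mu> f1" using integrable_mmult_left[OF o1 gm] e1 by simp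
  have i2: "integrable \<mu> f2" using integrable_mmult_left[OF o2 gm] e2 by simp
  have h1: "(\<integral>U. f1 U \<partial>\<mu>) = sqmom a b a d" using integral_mmult_left[OF o1 gm] e1 unfolding sqmom_def by simp
  have h2: "(\<integral>U. f2 U \<partial>\<mu>) = sqmom a b a d" using integral_mmult_left[OF o2 gm] e2 unfolding sqmom_def by simp
  have pw: "f1 U + f2 U = (1/2) * (U a b * U a b * U a d * U a d + U a b * U a b * U c d * U c d
      + U c b * U c b * U a d * U a d + U c b * U c b * U c d * U c d + 4 * (U a b * U a d * U c b * U c d))" for U
  proof -
    have "f1 U + f2 U = (s * s) * (s * s) * (2 * (U a b * U a b * U a d * U a d + U a b * U a b * U c d * U c d
      + U c b * U c b * U a d * U a d + U c b * U c b * U c d * U c d) + 8 * (U a b * U a d * U c b * U c d))"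
      unfolding f1_def f2_def by (simp add: algebra_simps)
    then show ?thesis unfolding ss by simp
  qed
  have "2 * sqmom a b a d = (\<integral>U. f1 U + f2 U \<partial>\<mu>)" using h1 h2 i1 i2 by simp
  also have "\<dots> = (\<integral>U. (1/2) * (U a b * U a b * U a d * U a d + U a b * U a b * U c d * U c d
      + U c b * U c b * U a d * U a d + U c b * U c b * U c d * U c d + 4 * (U a b * U a d * U c b * U c d)) \<partial>\<mu>)"
    by (simp add: pw)
  also have "\<dots> = (1/2) * (sqmom a b a d + sqmom a b c d + sqmom c b a d + sqmom c b c d + 4 * crossmom a c b d)"
    unfolding sqmom_def crossmom_def by (simp add: integral_add)
  finally show ?thesis by simp
qed

lemma sqmom_eq:
  assumes m2: "2 \<le> m" and lt: "a < m" "c < m" "b < m" "d < m"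
  shows "sqmom a b c d = hmom m (a = c) (b = d)"
proof -
  define A where "A = sqmom 0 b 0 d"
  define B where "B = sqmom 0 b 1 d"
  define Gv where "Gv = crossmom 0 1 b d"
  have m0: "0 < m" "1 < m" using m2 by auto
  have diag: "sqmom x b x d = A" if "x < m" for x
    unfolding A_def using sqmom_same_row[OF that m0(1) lt(3,4)] .
  have off: "sqmom x b y d = B" if "x < m" "y < m" "x \<noteq> y" for x y
    unfolding B_def using sqmom_distinct_rows[OF that(1,2) m0 that(3) _ lt(3,4)] by simp
  have offG: "crossmom x y b d = Gv" if "x < m" "y < m" "x \<noteq> y" for x y
    unfolding Gv_def using crossmom_distinct_rows[OF that(1,2) m0 that(3) _ lt(3,4)] by simp
  have col: "A + (real m - 1) * B = 1 / real m"
    using sum_sqmom[OF m0(1) lt(3,4)] sum_const_off[OF m0(1), of "\<lambda>c. sqmom 0 b c d" B] diag[OF m0(1)] off[OF m0(1)]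
    by auto
  have gv: "4 * A = A + B + B + A + 4 * Gv"
    using rotation_relation[OF m0 _ lt(3,4)] diag[OF m0(1)] diag[OF m0(2)] off[OF m0(1) m0(2)] off[OF m0(2) m0(1)]
    unfolding Gv_def by simp
  have rot: "2 * A = 2 * B + 4 * Gv" using gv by simp
  have cross: "if b = d then Gv = B else A + (real m - 1) * Gv = 0"
  proof (cases "b = d")
    case True
    then show ?thesis unfolding Gv_def B_def crossmom_def sqmom_def by (simp add: mult_ac)
  next
    case False
    have "crossmom 0 0 b d = A" unfolding A_def crossmom_def sqmom_def by (simp add: mult_ac)
    then show ?thesis
      using False sum_crossmom[OF m0(1) lt(3,4) False] sum_const_off[OF m0(1), of "\<lambda>c. crossmom 0 c b d" Gv] offG[OF m0(1)]
      by auto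
  qed
  have "A = hmom m True (b = d) \<and> B = hmom m False (b = d)"
    by (rule hmom_unique_solution[OF m2 col rot cross])
  then show ?thesis by (cases "a = c") (use diag[OF lt(1)] off[OF lt(1,2)] in auto)
qed

lemma integrable_sq_entries[simp, intro]: "integrable \<mu> (\<lambda>U. (U a b * U a b) * (U c d * U c d))"
  using integrable_entries4[of a b a b c d c d] by (simp add: mult.assoc)

lemma corner_sq_integrable[simp, intro]: "integrable \<mu> (corner_sq p q)"
proof (rule haar_orthogonal_integrable[OF haar, where B="real p * real q"])
  show "corner_sq p q \<in> borel_measurable borel" unfolding corner_sq_def by simp
  fix U assume "Defs.orthogonal_mat m U" then show "\<bar>corner_sq p q U\<bar> \<le> real p * real q"
    using corner_sq_bounds[of m U p q] by simp
qed

lemma corner_sq_sq_integrable[simp, intro]: "integrable \<mu> (\<lambda>U. (corner_sq p q U)^2)"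
proof (rule haar_orthogonal_integrable[OF haar, where B="(real p * real q)^2"])
  show "(\<lambda>U. (corner_sq p q U)^2) \<in> borel_measurable borel" unfolding corner_sq_def by simp
  fix U assume "Defs.orthogonal_mat m U" then show "\<bar>(corner_sq p q U)^2\<bar> \<le> (real p * real q)^2"
    using corner_sq_bounds[of m U p q] by (simp add: power_mono)
qed

lemma corner_sq_mean:
  assumes "p \<le> m" "q \<le> m"
  shows "(\<integral>U. corner_sq p q U \<partial>\<mu>) = real p * real q / real m"
proof -
  have "(\<integral>U. corner_sq p q U \<partial>\<mu>) = (\<Sum>l<p. \<Sum>l'<q. (\<integral>U. (U l l')^2 \<partial>\<mu>))"
    unfolding corner_sq_def by (simp add: power2_eq_square)
  also have "\<dots> = (\<Sum>l<p. \<Sum>l'<q. 1 / real m)"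
    using assms by (intro sum.cong refl entry_sq_integral) auto
  finally show ?thesis by simp
qed

lemma corner_sq_second_moment:
  assumes "2 \<le> m" "p \<le> m" "q \<le> m"
  shows "(\<integral>U. (corner_sq p q U)^2 \<partial>\<mu>) = (real p * real q / real m)^2 + corner_var m p q"
proof -
  have pw: "(corner_sq p q U)^2 = (\<Sum>l1<p. \<Sum>l2<p. \<Sum>c1<q. \<Sum>c2<q. (U l1 c1 * U l1 c1) * (U l2 c2 * U l2 c2))" for U
    unfolding corner_sq_def power2_eq_square by (simp only: sum_product)
  have "(\<integral>U. (corner_sq p q U)^2 \<partial>\<mu>) = (\<Sum>l1<p. \<Sum>l2<p. \<Sum>c1<q. \<Sum>c2<q. sqmom l1 c1 l2 c2)"
    unfolding pw sqmom_def by (simp add: Bochner_Integration.integral_sum integrable_sum del: mult.assoc) (simp add: mult.assoc)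
  also have "\<dots> = (\<Sum>l1<p. \<Sum>l2<p. \<Sum>c1<q. \<Sum>c2<q. hmom m (l1 = l2) (c1 = c2))"
    using assms by (intro sum.cong refl sqmom_eq) auto
  also have "\<dots> = (\<Sum>l1<p. \<Sum>l2<p. real q * hmom m (l1 = l2) True + real q * (real q - 1) * hmom m (l1 = l2) False)"
    by (simp add: sum_sum_hmom)
  also have "\<dots> = (\<Sum>l1<p. \<Sum>l2<p. (if l1 = l2 then real q * hmom m True True + real q * (real q - 1) * hmom m True False
       else real q * hmom m False True + real q * (real q - 1) * hmom m False False))"
    by (intro sum.cong refl) auto
  also have "\<dots> = (real p * real q / real m)^2 + corner_var m p q"
    by (simp only: sum_sum_diag_offdiag hmom_corner_identity[OF assms(1)])
  finally show ?thesis .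
qed

lemma corner_sq_variance:
  assumes "2 \<le> m" "p \<le> m" "q \<le> m"
  shows "(\<integral>U. (corner_sq p q U - real p * real q / real m)^2 \<partial>\<mu>) = corner_var m p q"
proof -
  let ?c = "real p * real q / real m"
  have "(\<integral>U. (corner_sq p q U - ?c)^2 \<partial>\<mu>) = (\<integral>U. (corner_sq p q U)^2 - 2 * ?c * corner_sq p q U + ?c^2 \<partial>\<mu>)"
    by (simp add: power2_diff mult_ac)
  also have "\<dots> = (\<integral>U. (corner_sq p q U)^2 \<partial>\<mu>) - 2 * ?c * (\<integral>U. corner_sq p q U \<partial>\<mu>) + ?c^2"
    by (simp add: prob_space)
  also have "\<dots> = corner_var m p q" using corner_sq_second_moment[OF assms] corner_sq_mean[OF assms(2,3)] by (simp add: power2_eq_square)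
  finally show ?thesis .
qed

lemma corner_sq_centered_mean:
  assumes "p \<le> m" "q \<le> m"
  shows "(\<integral>U. (corner_sq p q U - real p * real q / real m) \<partial>\<mu>) = 0"
  using corner_sq_mean[OF assms] by (simp add: prob_space)

end

lemma integral_overlap_eq_corner_sq:
  fixes f :: "real \<Rightarrow> real"
  assumes h: "haar_orthogonal m \<mu>" and W: "Defs.orthogonal_mat m W" and pq: "p \<le> m" "q \<le> m"
    and f: "f \<in> borel_measurable borel"
  shows "(\<integral>U. f (overlap m p q U W) \<partial>\<mu>) = (\<integral>S. f (corner_sq p q S) \<partial>(distr \<mu> borel (\<lambda>U. mmult m U (mtranspose m W))))"
proof -
  have gm: "(\<lambda>S. f (corner_sq p q S)) \<in> borel_measurable borel" unfolding corner_sq_def using f by simp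
  show ?thesis
    using integral_distr[OF haar_orthogonal_measurable[OF h measurable_mmult_right] gm] overlap_eq_corner_sq[OF pq] by simp
qed

lemma overlap_centered_mean:
  assumes h: "haar_orthogonal m \<mu>" and W: "Defs.orthogonal_mat m W" and pq: "p \<le> m" "q \<le> m"
  shows "(\<integral>U. overlap m p q U W - real p * real q / real m \<partial>\<mu>) = 0"
proof -
  interpret nu: haar_orth m "distr \<mu> borel (\<lambda>U. mmult m U (mtranspose m W))"
    by unfold_locales (rule haar_orthogonal_mmult_right[OF h orthogonal_mat_mtranspose[OF W]])
  show ?thesis using integral_overlap_eq_corner_sq[OF h W pq, of "\<lambda>y. y - real p * real q / real m"] nu.corner_sq_centered_mean[OF pq] by simp
qed

lemma overlap_variance:
  assumes h: "haar_orthogonal m \<mu>" and W: "Defs.orthogonal_mat m W" and pq: "p \<le> m" "q \<le> m" and m2: "2 \<le> m"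
  shows "(\<integral>U. (overlap m p q U W - real p * real q / real m)^2 \<partial>\<mu>) = corner_var m p q"
proof -
  interpret nu: haar_orth m "distr \<mu> borel (\<lambda>U. mmult m U (mtranspose m W))"
    by unfold_locales (rule haar_orthogonal_mmult_right[OF h orthogonal_mat_mtranspose[OF W]])
  show ?thesis using integral_overlap_eq_corner_sq[OF h W pq, of "\<lambda>y. (y - real p * real q / real m)^2"] nu.corner_sq_variance[OF m2 pq] by simp
qed

section \<open>Independent Haar matrices\<close>

lemma integral_sum_sum:
  fixes f :: "_ \<Rightarrow> _ \<Rightarrow> _ \<Rightarrow> real"
  assumes "\<And>i j. i \<in> A \<Longrightarrow> j \<in> B \<Longrightarrow> integrable M (f i j)"
  shows "(\<integral>x. (\<Sum>i\<in>A. \<Sum>j\<in>B. f i j x) \<partial>M) = (\<Sum>i\<in>A. \<Sum>j\<in>B. (\<integral>x. f i j x \<partial>M))"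
proof -
  have "(\<integral>x. (\<Sum>i\<in>A. \<Sum>j\<in>B. f i j x) \<partial>M) = (\<Sum>i\<in>A. (\<integral>x. (\<Sum>j\<in>B. f i j x) \<partial>M))"
    by (rule Bochner_Integration.integral_sum) (use assms in \<open>auto intro!: integrable_sum\<close>)
  also have "\<dots> = (\<Sum>i\<in>A. \<Sum>j\<in>B. (\<integral>x. f i j x \<partial>M))"
    by (intro sum.cong refl Bochner_Integration.integral_sum) (use assms in auto)
  finally show ?thesis .
qed

lemma sum_diag_offdiag:
  fixes a :: real and k i :: nat
  assumes "i < k"
  shows "(\<Sum>j<k. (if i = j then a else X j)) = a + (\<Sum>j<k. (if i \<noteq> j then X j else 0))"
proof -
  have "(\<Sum>j<k. (if i = j then a else X j)) = (\<Sum>j<k. (if i = j then a else 0) + (if i \<noteq> j then X j else 0))"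
    by (intro sum.cong refl) auto
  also have "\<dots> = a + (\<Sum>j<k. (if i \<noteq> j then X j else 0))"
  proof -
    have "(\<Sum>j<k. (if i = j then a else 0)) = a" using assms by (subst sum.delta') auto
    then show ?thesis by (simp add: sum.distrib)
  qed
  finally show ?thesis .
qed

lemma (in prob_space) integral_indep_var_eq_const:
  fixes F :: "'b \<times> 'b \<Rightarrow> real"
  assumes indep: "indep_var N X N' Y"
    and F: "F \<in> borel_measurable (N \<Otimes>\<^sub>M N')"
    and int: "integrable M (\<lambda>\<omega>. F (X \<omega>, Y \<omega>))"
    and inner: "AE x in distr M N X. (\<integral>y. F (x, y) \<partial>distr M N' Y) = c"
  shows "(\<integral>\<omega>. F (X \<omega>, Y \<omega>) \<partial>M) = c"
proof -
  have X: "random_variable N X" and Y: "random_variable N' Y"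
    and joint: "distr M N X \<Otimes>\<^sub>M distr M N' Y = distr M (N \<Otimes>\<^sub>M N') (\<lambda>\<omega>. (X \<omega>, Y \<omega>))"
    using indep unfolding indep_var_distribution_eq by auto
  interpret L: prob_space "distr M N X" by (rule prob_space_distr[OF X])
  interpret R: prob_space "distr M N' Y" by (rule prob_space_distr[OF Y])
  interpret LR: pair_sigma_finite "distr M N X" "distr M N' Y" ..
  have XY: "(\<lambda>\<omega>. (X \<omega>, Y \<omega>)) \<in> measurable M (N \<Otimes>\<^sub>M N')" using X Y by (rule measurable_Pair)
  have F': "F \<in> borel_measurable (distr M N X \<Otimes>\<^sub>M distr M N' Y)"
    using F by (simp add: joint)
  have "(\<integral>\<omega>. F (X \<omega>, Y \<omega>) \<partial>M) = integral\<^sup>L (distr M N X \<Otimes>\<^sub>M distr M N' Y) F"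
    unfolding joint by (rule integral_distr[OF XY F, symmetric])
  also have "\<dots> = (\<integral>x. (\<integral>y. F (x, y) \<partial>distr M N' Y) \<partial>distr M N X)"
    using integrable_distr_eq[OF XY F] int by (intro LR.integral_fst'[symmetric]) (simp add: joint)
  also have "\<dots> = (\<integral>x. c \<partial>distr M N X)"
  proof (rule integral_cong_AE)
    show "(\<lambda>x. \<integral>y. F (x, y) \<partial>distr M N' Y) \<in> borel_measurable (distr M N X)"
      using F' by (intro R.borel_measurable_lebesgue_integral) (simp add: case_prod_eta)
  qed (use inner in simp_all)
  also have "\<dots> = c" using L.prob_space by simp
  finally show ?thesis .
qed

locale indep_haar = prob_space M for M :: "'a measure" +
  fixes k m :: nat and ps :: "nat \<Rightarrow> nat" and Om :: "nat \<Rightarrow> 'a \<Rightarrow> (nat \<Rightarrow> nat \<Rightarrow> real)"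
  assumes indep: "indep_vars (\<lambda>_. borel) Om {..<k}"
    and haar_Om: "\<And>i. i < k \<Longrightarrow> haar_orthogonal m (distr M borel (Om i))"
    and ps_le: "\<And>i. i < k \<Longrightarrow> ps i \<le> m"
begin

lemma measurable_Om: "i < k \<Longrightarrow> Om i \<in> measurable M borel"
  using indep unfolding indep_vars_def by auto

lemma AE_orthogonal_Om: "i < k \<Longrightarrow> AE \<omega> in M. Defs.orthogonal_mat m (Om i \<omega>)"
  using haar_orthogonal_AE[OF haar_Om, of i] AE_distr_iff[OF measurable_Om, of i "Defs.orthogonal_mat m"] orthogonal_mat_sets[of m]
  by (simp add: Collect_conv_if)

lemma AE_orthogonal_all: "AE \<omega> in M. \<forall>i<k. Defs.orthogonal_mat m (Om i \<omega>)"
proof -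
  have "AE \<omega> in M. \<forall>i\<in>{..<k}. Defs.orthogonal_mat m (Om i \<omega>)"
    by (rule AE_finite_allI) (auto intro: AE_orthogonal_Om)
  then show ?thesis by (rule eventually_mono) auto
qed

lemma integral_indep_fix_rest:
  fixes F :: "((nat \<Rightarrow> nat \<Rightarrow> nat \<Rightarrow> real) \<times> (nat \<Rightarrow> nat \<Rightarrow> real)) \<Rightarrow> real"
  assumes u: "u < k" and v: "v < k" "v \<noteq> u"
    and Fm: "F \<in> borel_measurable (PiM ({..<k} - {u}) (\<lambda>_. borel) \<Otimes>\<^sub>M borel)"
    and Fi: "integrable M (\<lambda>\<omega>. F (restrict (\<lambda>i. Om i \<omega>) ({..<k} - {u}), Om u \<omega>))"
    and inner: "\<And>r. Defs.orthogonal_mat m (r v) \<Longrightarrow> (\<integral>w. F (r, w) \<partial>(distr M borel (Om u))) = c"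
  shows "(\<integral>\<omega>. F (restrict (\<lambda>i. Om i \<omega>) ({..<k} - {u}), Om u \<omega>) \<partial>M) = c"
proof -
  define B where "B = {..<k} - {u}"
  define R where "R = (\<lambda>\<omega>. restrict (\<lambda>i. Om i \<omega>) B)"
  define S where "S = (\<lambda>\<omega>. restrict (\<lambda>i. Om i \<omega>) {u})"
  define F' where "F' = (\<lambda>(r, w::nat \<Rightarrow> nat \<Rightarrow> nat \<Rightarrow> real). F (r, w u))"
  have vB: "v \<in> B" using v unfolding B_def by auto
  have indep_RS: "indep_var (PiM B (\<lambda>_. borel)) R (PiM {u} (\<lambda>_. borel)) S"
    unfolding R_def S_def B_def using u by (intro indep_var_restrict[OF indep]) auto
  have R: "R \<in> measurable M (PiM B (\<lambda>_. borel))" and S: "S \<in> measurable M (PiM {u} (\<lambda>_. borel))"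
    using indep_RS by (auto dest: indep_var_rv1 indep_var_rv2)
  have eval_u: "(\<lambda>w::nat \<Rightarrow> nat \<Rightarrow> nat \<Rightarrow> real. w u) \<in> measurable (PiM {u} (\<lambda>_. borel)) borel"
    by (rule measurable_component_singleton) simp
  have F'm: "F' \<in> borel_measurable (PiM B (\<lambda>_. borel) \<Otimes>\<^sub>M PiM {u} (\<lambda>_. borel))"
    unfolding F'_def using Fm eval_u unfolding B_def by (auto simp: split_beta')
  have "(\<integral>\<omega>. F (R \<omega>, Om u \<omega>) \<partial>M) = (\<integral>\<omega>. F' (R \<omega>, S \<omega>) \<partial>M)"
    unfolding F'_def S_def by simp
  also have "\<dots> = c"
  proof (rule integral_indep_var_eq_const[OF indep_RS F'm])
    show "integrable M (\<lambda>\<omega>. F' (R \<omega>, S \<omega>))" using Fi unfolding F'_def R_def S_def B_def by simp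
    have "Measurable.pred (PiM B (\<lambda>_. borel)) (\<lambda>r. Defs.orthogonal_mat m (r v))"
      using measurable_compose[OF measurable_component_singleton[OF vB] pred_orthogonal_mat] .
    moreover have "AE \<omega> in M. Defs.orthogonal_mat m (R \<omega> v)"
      using AE_orthogonal_Om[OF v(1)] vB unfolding R_def by simp
    ultimately have "AE r in distr M (PiM B (\<lambda>_. borel)) R. Defs.orthogonal_mat m (r v)"
      by (subst AE_distr_iff[OF R]) (simp_all add: pred_def)
    then show "AE r in distr M (PiM B (\<lambda>_. borel)) R. (\<integral>w. F' (r, w) \<partial>distr M (PiM {u} (\<lambda>_. borel)) S) = c"
      using AE_space
    proof eventually_elim
      case (elim r)
      have Fr: "(\<lambda>x. F (r, x)) \<in> borel_measurable borel"
        using measurable_Pair2[OF Fm] elim(2) unfolding B_def by simp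
      then have "(\<integral>w. F' (r, w) \<partial>distr M (PiM {u} (\<lambda>_. borel)) S) = (\<integral>x. F (r, x) \<partial>distr M borel (Om u))"
        using integral_distr[OF S, of "\<lambda>w. F (r, w u)"] integral_distr[OF measurable_Om[OF u] Fr] eval_u
        unfolding F'_def S_def by simp
      then show ?case using inner elim(1) by simp
    qed
  qed
  finally show ?thesis unfolding R_def B_def .
qed

definition overlap_mean where "overlap_mean i j = real (ps i) * real (ps j) / real m"
definition overlap_dev where "overlap_dev i j \<omega> = overlap m (ps i) (ps j) (Om i \<omega>) (Om j \<omega>) - overlap_mean i j"

lemma overlap_dev_sym: "overlap_dev i j \<omega> = overlap_dev j i \<omega>"
  unfolding overlap_dev_def overlap_mean_def by (subst overlap_commute) (simp add: mult.commute)

lemma overlap_dev_measurable: "i < k \<Longrightarrow> j < k \<Longrightarrow> overlap_dev i j \<in> borel_measurable M"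
  unfolding overlap_dev_def using measurable_Om[of i] measurable_Om[of j] by measurable

lemma AE_overlap_dev_bound: "i < k \<Longrightarrow> j < k \<Longrightarrow> AE \<omega> in M. \<bar>overlap_dev i j \<omega>\<bar> \<le> 2 * real (ps i) * real (ps j)"
  using AE_orthogonal_all by (rule eventually_mono) (auto simp: overlap_dev_def overlap_mean_def intro!: overlap_centered_bound ps_le)

lemma overlap_dev_integrable: "i < k \<Longrightarrow> j < k \<Longrightarrow> integrable M (overlap_dev i j)"
  by (rule integrable_const_bound[OF _ overlap_dev_measurable]) (use AE_overlap_dev_bound in auto)

lemma overlap_dev_mult_integrable: "i < k \<Longrightarrow> j < k \<Longrightarrow> a < k \<Longrightarrow> b < k \<Longrightarrow> integrable M (\<lambda>\<omega>. overlap_dev i j \<omega> * overlap_dev a b \<omega>)"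
proof (rule integrable_const_bound[where B="(2 * real (ps i) * real (ps j)) * (2 * real (ps a) * real (ps b))"])
  assume l: "i < k" "j < k" "a < k" "b < k"
  show "AE \<omega> in M. norm (overlap_dev i j \<omega> * overlap_dev a b \<omega>) \<le> (2 * real (ps i) * real (ps j)) * (2 * real (ps a) * real (ps b))"
    using AE_overlap_dev_bound[OF l(1,2)] AE_overlap_dev_bound[OF l(3,4)]
  proof eventually_elim
    case (elim \<omega>)
    have "\<bar>overlap_dev i j \<omega>\<bar> * \<bar>overlap_dev a b \<omega>\<bar> \<le> (2 * real (ps i) * real (ps j)) * (2 * real (ps a) * real (ps b))"
      by (rule mult_mono) (use elim in auto)
    then show ?case by (simp add: abs_mult)
  qed
  show "(\<lambda>\<omega>. overlap_dev i j \<omega> * overlap_dev a b \<omega>) \<in> borel_measurable M" using overlap_dev_measurable l by simp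
qed

lemma measurable_overlap_fixed:
  assumes "j \<in> B"
  shows "(\<lambda>x. overlap m (ps i) (ps j) (snd x) (fst x j) - overlap_mean i j) \<in> borel_measurable (PiM B (\<lambda>_. borel) \<Otimes>\<^sub>M borel)"
proof -
  have "(\<lambda>x. overlap m (ps i) (ps j) (snd x) (fst x j)) \<in> borel_measurable (PiM B (\<lambda>_. borel) \<Otimes>\<^sub>M borel)"
    by (rule measurable_overlap[OF measurable_snd measurable_fst_component[OF assms]])
  then show ?thesis by (rule borel_measurable_diff) (rule borel_measurable_const)
qed

lemma measurable_overlap_rest:
  assumes "a \<in> B" "b \<in> B"
  shows "(\<lambda>x::(nat \<Rightarrow> nat \<Rightarrow> nat \<Rightarrow> real) \<times> (nat \<Rightarrow> nat \<Rightarrow> real). overlap m (ps a) (ps b) (fst x a) (fst x b) - overlap_mean a b) \<in> borel_measurable (PiM B (\<lambda>_. borel) \<Otimes>\<^sub>M borel)"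
proof -
  have "(\<lambda>x::(nat \<Rightarrow> nat \<Rightarrow> nat \<Rightarrow> real) \<times> (nat \<Rightarrow> nat \<Rightarrow> real). overlap m (ps a) (ps b) (fst x a) (fst x b)) \<in> borel_measurable (PiM B (\<lambda>_. borel) \<Otimes>\<^sub>M borel)"
    by (rule measurable_overlap[OF measurable_fst_component[OF assms(1)] measurable_fst_component[OF assms(2)]])
  then show ?thesis by (rule borel_measurable_diff) (rule borel_measurable_const)
qed

lemma overlap_dev_mean:
  assumes "i < k" "j < k" "i \<noteq> j"
  shows "(\<integral>\<omega>. overlap_dev i j \<omega> \<partial>M) = 0"
proof -
  define B where "B = {..<k} - {i}"
  have jB: "j \<in> B" using assms unfolding B_def by auto
  define F where "F = (\<lambda>x::(nat \<Rightarrow> nat \<Rightarrow> nat \<Rightarrow> real) \<times> (nat \<Rightarrow> nat \<Rightarrow> real). overlap m (ps i) (ps j) (snd x) (fst x j) - overlap_mean i j)"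
  have eq: "(\<lambda>\<omega>. F (restrict (\<lambda>i. Om i \<omega>) B, Om i \<omega>)) = overlap_dev i j"
    using jB unfolding F_def overlap_dev_def by (intro ext) simp
  have "(\<integral>\<omega>. F (restrict (\<lambda>i. Om i \<omega>) B, Om i \<omega>) \<partial>M) = 0"
    unfolding B_def
  proof (rule integral_indep_fix_rest[OF assms(1) assms(2) assms(3)[symmetric]])
    show "F \<in> borel_measurable (PiM ({..<k} - {i}) (\<lambda>_. borel) \<Otimes>\<^sub>M borel)"
      using measurable_overlap_fixed[OF jB] unfolding F_def B_def .
    show "integrable M (\<lambda>\<omega>. F (restrict (\<lambda>i. Om i \<omega>) ({..<k} - {i}), Om i \<omega>))"
      using eq overlap_dev_integrable[OF assms(1,2)] unfolding B_def by simp
    fix r :: "nat \<Rightarrow> nat \<Rightarrow> nat \<Rightarrow> real" assume "Defs.orthogonal_mat m (r j)"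
    then show "(\<integral>w. F (r, w) \<partial>distr M borel (Om i)) = 0"
      unfolding F_def overlap_mean_def using overlap_centered_mean[OF haar_Om[OF assms(1)] _ ps_le[OF assms(1)] ps_le[OF assms(2)]] by simp
  qed
  then show ?thesis using eq by simp
qed

lemma overlap_dev_sq:
  assumes "i < k" "j < k" "i \<noteq> j" "2 \<le> m"
  shows "(\<integral>\<omega>. overlap_dev i j \<omega> * overlap_dev i j \<omega> \<partial>M) = corner_var m (ps i) (ps j)"
proof -
  define B where "B = {..<k} - {i}"
  have jB: "j \<in> B" using assms unfolding B_def by auto
  define G where "G = (\<lambda>x::(nat \<Rightarrow> nat \<Rightarrow> nat \<Rightarrow> real) \<times> (nat \<Rightarrow> nat \<Rightarrow> real). overlap m (ps i) (ps j) (snd x) (fst x j) - overlap_mean i j)"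
  define F where "F = (\<lambda>x. G x * G x)"
  have eq: "(\<lambda>\<omega>. F (restrict (\<lambda>i. Om i \<omega>) B, Om i \<omega>)) = (\<lambda>\<omega>. overlap_dev i j \<omega> * overlap_dev i j \<omega>)"
    using jB unfolding F_def G_def overlap_dev_def by (intro ext) simp
  have Fm: "F \<in> borel_measurable (PiM B (\<lambda>_. borel) \<Otimes>\<^sub>M borel)"
    unfolding F_def G_def by (rule borel_measurable_times[OF measurable_overlap_fixed[OF jB] measurable_overlap_fixed[OF jB]])
  have "(\<integral>\<omega>. F (restrict (\<lambda>i. Om i \<omega>) B, Om i \<omega>) \<partial>M) = corner_var m (ps i) (ps j)"
    unfolding B_def
  proof (rule integral_indep_fix_rest[OF assms(1) assms(2) assms(3)[symmetric]])
    show "F \<in> borel_measurable (PiM ({..<k} - {i}) (\<lambda>_. borel) \<Otimes>\<^sub>M borel)" using Fm unfolding B_def .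
    show "integrable M (\<lambda>\<omega>. F (restrict (\<lambda>i. Om i \<omega>) ({..<k} - {i}), Om i \<omega>))"
      using eq overlap_dev_mult_integrable[OF assms(1,2,1,2)] unfolding B_def by simp
    fix r :: "nat \<Rightarrow> nat \<Rightarrow> nat \<Rightarrow> real" assume "Defs.orthogonal_mat m (r j)"
    then show "(\<integral>w. F (r, w) \<partial>distr M borel (Om i)) = corner_var m (ps i) (ps j)"
      unfolding F_def G_def overlap_mean_def using overlap_variance[OF haar_Om[OF assms(1)] _ ps_le[OF assms(1)] ps_le[OF assms(2)] assms(4)]
      by (simp add: power2_eq_square)
  qed
  then show ?thesis using eq by simp
qed

lemma overlap_dev_cross:
  assumes "i < k" "j < k" "i \<noteq> j" "a < k" "b < k" "a \<noteq> i" "b \<noteq> i"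
  shows "(\<integral>\<omega>. overlap_dev i j \<omega> * overlap_dev a b \<omega> \<partial>M) = 0"
proof -
  define B where "B = {..<k} - {i}"
  have jB: "j \<in> B" "a \<in> B" "b \<in> B" using assms unfolding B_def by auto
  define G where "G = (\<lambda>x::(nat \<Rightarrow> nat \<Rightarrow> nat \<Rightarrow> real) \<times> (nat \<Rightarrow> nat \<Rightarrow> real). overlap m (ps i) (ps j) (snd x) (fst x j) - overlap_mean i j)"
  define K where "K = (\<lambda>x::(nat \<Rightarrow> nat \<Rightarrow> nat \<Rightarrow> real) \<times> (nat \<Rightarrow> nat \<Rightarrow> real). overlap m (ps a) (ps b) (fst x a) (fst x b) - overlap_mean a b)"
  define F where "F = (\<lambda>x. G x * K x)"
  have eq: "(\<lambda>\<omega>. F (restrict (\<lambda>i. Om i \<omega>) B, Om i \<omega>)) = (\<lambda>\<omega>. overlap_dev i j \<omega> * overlap_dev a b \<omega>)"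
    using jB unfolding F_def G_def K_def overlap_dev_def by (intro ext) simp
  have Fm: "F \<in> borel_measurable (PiM B (\<lambda>_. borel) \<Otimes>\<^sub>M borel)"
    unfolding F_def G_def K_def by (rule borel_measurable_times[OF measurable_overlap_fixed[OF jB(1)] measurable_overlap_rest[OF jB(2,3)]])
  have "(\<integral>\<omega>. F (restrict (\<lambda>i. Om i \<omega>) B, Om i \<omega>) \<partial>M) = 0"
    unfolding B_def
  proof (rule integral_indep_fix_rest[OF assms(1) assms(2) assms(3)[symmetric]])
    show "F \<in> borel_measurable (PiM ({..<k} - {i}) (\<lambda>_. borel) \<Otimes>\<^sub>M borel)" using Fm unfolding B_def .
    show "integrable M (\<lambda>\<omega>. F (restrict (\<lambda>i. Om i \<omega>) ({..<k} - {i}), Om i \<omega>))"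
      using eq overlap_dev_mult_integrable[OF assms(1,2,4,5)] unfolding B_def by simp
    fix r :: "nat \<Rightarrow> nat \<Rightarrow> nat \<Rightarrow> real" assume o: "Defs.orthogonal_mat m (r j)"
    have "(\<integral>w. F (r, w) \<partial>distr M borel (Om i)) = (\<integral>w. (overlap m (ps i) (ps j) w (r j) - overlap_mean i j) \<partial>distr M borel (Om i))
        * (overlap m (ps a) (ps b) (r a) (r b) - overlap_mean a b)"
      unfolding F_def G_def K_def by simp
    also have "(\<integral>w. (overlap m (ps i) (ps j) w (r j) - overlap_mean i j) \<partial>distr M borel (Om i)) = 0"
      unfolding overlap_mean_def using overlap_centered_mean[OF haar_Om[OF assms(1)] o ps_le[OF assms(1)] ps_le[OF assms(2)]] by simp
    finally show "(\<integral>w. F (r, w) \<partial>distr M borel (Om i)) = 0" by simp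
  qed
  then show ?thesis using eq by simp
qed

definition offdiag_dev where "offdiag_dev i j \<omega> = (if i = j then 0 else overlap_dev i j \<omega>)"

lemma offdiag_dev_covariance:
  assumes "i < k" "j < k" "a < k" "b < k" "2 \<le> m"
  shows "(\<integral>\<omega>. offdiag_dev i j \<omega> * offdiag_dev a b \<omega> \<partial>M) = (if i \<noteq> j \<and> ((a = i \<and> b = j) \<or> (a = j \<and> b = i)) then corner_var m (ps i) (ps j) else 0)"
proof (cases "i = j \<or> a = b")
  case True then show ?thesis unfolding offdiag_dev_def by auto
next
  case False
  then have ij: "i \<noteq> j" and ab: "a \<noteq> b" by auto
  show ?thesis
  proof (cases "(a = i \<and> b = j) \<or> (a = j \<and> b = i)")
    case True
    then have "overlap_dev a b = overlap_dev i j" using overlap_dev_sym by (auto simp: fun_eq_iff)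
    then show ?thesis using True ij ab overlap_dev_sq[OF assms(1,2) ij assms(5)] unfolding offdiag_dev_def by simp
  next
    case nt: False
    show ?thesis
    proof (cases "a \<noteq> i \<and> b \<noteq> i")
      case True
      then show ?thesis using nt ij ab overlap_dev_cross[OF assms(1,2) ij assms(3,4)] unfolding offdiag_dev_def by simp
    next
      case False
      then have "a \<noteq> j \<and> b \<noteq> j" using nt ab ij by auto
      then have "(\<integral>\<omega>. overlap_dev j i \<omega> * overlap_dev a b \<omega> \<partial>M) = 0" using overlap_dev_cross[OF assms(2,1) ij[symmetric] assms(3,4)] by simp
      moreover have "overlap_dev j i = overlap_dev i j" using overlap_dev_sym by (auto simp: fun_eq_iff)
      ultimately show ?thesis using nt ij ab unfolding offdiag_dev_def by auto
    qed
  qed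
qed

definition trace_sq_mean where "trace_sq_mean = (\<Sum>i<k. \<Sum>j<k. (if i = j then real (ps i) else overlap_mean i j))"

lemma offdiag_dev_integrable: "i < k \<Longrightarrow> j < k \<Longrightarrow> integrable M (offdiag_dev i j)"
  unfolding offdiag_dev_def by (cases "i = j") (auto intro: overlap_dev_integrable)

lemma offdiag_dev_mult_integrable: "i < k \<Longrightarrow> j < k \<Longrightarrow> a < k \<Longrightarrow> b < k \<Longrightarrow> integrable M (\<lambda>\<omega>. offdiag_dev i j \<omega> * offdiag_dev a b \<omega>)"
  unfolding offdiag_dev_def by (cases "i = j"; cases "a = b") (auto intro: overlap_dev_mult_integrable)

lemma offdiag_dev_mean: "i < k \<Longrightarrow> j < k \<Longrightarrow> (\<integral>\<omega>. offdiag_dev i j \<omega> \<partial>M) = 0"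
  unfolding offdiag_dev_def by (cases "i = j") (auto intro: overlap_dev_mean)

lemma trace_sq_eq_overlaps: "trace_sq m (Qmat k m ps (\<lambda>i. Om i \<omega>)) = (\<Sum>i<k. \<Sum>j<k. overlap m (ps i) (ps j) (Om i \<omega>) (Om j \<omega>))"
  by (rule trace_sq_Qmat_eq_overlaps) (auto intro: ps_le)

lemma AE_trace_sq_eq: "AE \<omega> in M. trace_sq m (Qmat k m ps (\<lambda>i. Om i \<omega>)) = trace_sq_mean + (\<Sum>i<k. \<Sum>j<k. offdiag_dev i j \<omega>)"
  using AE_orthogonal_all
proof eventually_elim
  case (elim \<omega>)
  have "trace_sq m (Qmat k m ps (\<lambda>i. Om i \<omega>)) = (\<Sum>i<k. \<Sum>j<k. (if i = j then real (ps i) else overlap_mean i j) + offdiag_dev i j \<omega>)"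
    unfolding trace_sq_eq_overlaps
  proof (intro sum.cong refl)
    fix i j assume "i \<in> {..<k}" "j \<in> {..<k}"
    then show "overlap m (ps i) (ps j) (Om i \<omega>) (Om j \<omega>) = (if i = j then real (ps i) else overlap_mean i j) + offdiag_dev i j \<omega>"
      using elim overlap_self[of m "Om i \<omega>" "ps i"] ps_le[of i] unfolding offdiag_dev_def overlap_dev_def by auto
  qed
  also have "\<dots> = trace_sq_mean + (\<Sum>i<k. \<Sum>j<k. offdiag_dev i j \<omega>)" unfolding trace_sq_mean_def by (simp add: sum.distrib)
  finally show ?case .
qed

lemma trace_sq_expectation: "(\<integral>\<omega>. trace_sq m (Qmat k m ps (\<lambda>i. Om i \<omega>)) \<partial>M) = trace_sq_mean"
proof -
  have "(\<integral>\<omega>. trace_sq m (Qmat k m ps (\<lambda>i. Om i \<omega>)) \<partial>M) = (\<integral>\<omega>. trace_sq_mean + (\<Sum>i<k. \<Sum>j<k. offdiag_dev i j \<omega>) \<partial>M)"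
  proof (rule integral_cong_AE)
    show "AE \<omega> in M. trace_sq m (Qmat k m ps (\<lambda>i. Om i \<omega>)) = trace_sq_mean + (\<Sum>i<k. \<Sum>j<k. offdiag_dev i j \<omega>)" by (rule AE_trace_sq_eq)
    show "(\<lambda>\<omega>. trace_sq m (Qmat k m ps (\<lambda>i. Om i \<omega>))) \<in> borel_measurable M"
      unfolding trace_sq_eq_overlaps by (intro borel_measurable_sum) (auto intro: measurable_overlap measurable_Om)
    show "(\<lambda>\<omega>. trace_sq_mean + (\<Sum>i<k. \<Sum>j<k. offdiag_dev i j \<omega>)) \<in> borel_measurable M"
      using offdiag_dev_integrable by (intro borel_measurable_add borel_measurable_const borel_measurable_sum) auto
  qed
  also have "\<dots> = (\<integral>\<omega>. trace_sq_mean \<partial>M) + (\<integral>\<omega>. (\<Sum>i<k. \<Sum>j<k. offdiag_dev i j \<omega>) \<partial>M)"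
    by (rule Bochner_Integration.integral_add) (auto intro!: integrable_sum offdiag_dev_integrable)
  also have "(\<integral>\<omega>. (\<Sum>i<k. \<Sum>j<k. offdiag_dev i j \<omega>) \<partial>M) = (\<Sum>i<k. \<Sum>j<k. (\<integral>\<omega>. offdiag_dev i j \<omega> \<partial>M))"
    by (rule integral_sum_sum) (auto intro: offdiag_dev_integrable)
  finally show ?thesis by (simp add: prob_space offdiag_dev_mean)
qed

lemma sum_sum_pair_indicator:
  fixes v :: real
  assumes "i < k" "j < k"
  shows "(\<Sum>a<k. \<Sum>b<k. (if i \<noteq> j \<and> ((a = i \<and> b = j) \<or> (a = j \<and> b = i)) then v else 0)) = (if i \<noteq> j then 2 * v else 0)"
proof (cases "i = j")
  case False
  have "(\<Sum>a<k. \<Sum>b<k. (if i \<noteq> j \<and> ((a = i \<and> b = j) \<or> (a = j \<and> b = i)) then v else 0))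
      = (\<Sum>a<k. (if a = i then v else 0) + (if a = j then v else 0))"
  proof (rule sum.cong[OF refl])
    fix a assume "a \<in> {..<k}"
    show "(\<Sum>b<k. (if i \<noteq> j \<and> ((a = i \<and> b = j) \<or> (a = j \<and> b = i)) then v else 0)) = (if a = i then v else 0) + (if a = j then v else 0)"
      using False assms by (cases "a = i"; cases "a = j") (auto simp: sum.delta)
  qed
  also have "\<dots> = 2 * v" using assms False by (simp add: sum.distrib)
  finally show ?thesis using False by simp
qed simp

lemma trace_sq_variance:
  assumes "2 \<le> m"
  shows "variance (\<lambda>\<omega>. trace_sq m (Qmat k m ps (\<lambda>i. Om i \<omega>))) = (\<Sum>i<k. \<Sum>j<k. (if i \<noteq> j then 2 * corner_var m (ps i) (ps j) else 0))"
proof -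
  have "variance (\<lambda>\<omega>. trace_sq m (Qmat k m ps (\<lambda>i. Om i \<omega>))) = (\<integral>\<omega>. (trace_sq m (Qmat k m ps (\<lambda>i. Om i \<omega>)) - trace_sq_mean)^2 \<partial>M)"
    by (simp add: trace_sq_expectation)
  also have "\<dots> = (\<integral>\<omega>. (\<Sum>i<k. \<Sum>j<k. \<Sum>a<k. \<Sum>b<k. offdiag_dev i j \<omega> * offdiag_dev a b \<omega>) \<partial>M)"
  proof (rule integral_cong_AE)
    show "AE \<omega> in M. (trace_sq m (Qmat k m ps (\<lambda>i. Om i \<omega>)) - trace_sq_mean)^2 = (\<Sum>i<k. \<Sum>j<k. \<Sum>a<k. \<Sum>b<k. offdiag_dev i j \<omega> * offdiag_dev a b \<omega>)"
      using AE_trace_sq_eq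
    proof eventually_elim
      case (elim \<omega>)
      have "(\<Sum>i<k. \<Sum>j<k. offdiag_dev i j \<omega>)^2 = (\<Sum>i<k. \<Sum>j<k. \<Sum>a<k. \<Sum>b<k. offdiag_dev i j \<omega> * offdiag_dev a b \<omega>)"
        by (simp only: power2_eq_square sum_distrib_right) (simp only: sum_distrib_left)
      then show ?case using elim by simp
    qed
    show "(\<lambda>\<omega>. (trace_sq m (Qmat k m ps (\<lambda>i. Om i \<omega>)) - trace_sq_mean)^2) \<in> borel_measurable M"
      unfolding trace_sq_eq_overlaps by (intro borel_measurable_power borel_measurable_diff borel_measurable_const borel_measurable_sum) (auto intro: measurable_overlap measurable_Om)
    show "(\<lambda>\<omega>. \<Sum>i<k. \<Sum>j<k. \<Sum>a<k. \<Sum>b<k. offdiag_dev i j \<omega> * offdiag_dev a b \<omega>) \<in> borel_measurable M"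
      using offdiag_dev_mult_integrable by (intro borel_measurable_sum) auto
  qed
  also have "\<dots> = (\<Sum>i<k. \<Sum>j<k. \<Sum>a<k. \<Sum>b<k. (\<integral>\<omega>. offdiag_dev i j \<omega> * offdiag_dev a b \<omega> \<partial>M))"
  proof -
    have "(\<integral>\<omega>. (\<Sum>i<k. \<Sum>j<k. \<Sum>a<k. \<Sum>b<k. offdiag_dev i j \<omega> * offdiag_dev a b \<omega>) \<partial>M) = (\<Sum>i<k. \<Sum>j<k. (\<integral>\<omega>. (\<Sum>a<k. \<Sum>b<k. offdiag_dev i j \<omega> * offdiag_dev a b \<omega>) \<partial>M))"
      by (rule integral_sum_sum) (auto intro!: integrable_sum offdiag_dev_mult_integrable)
    also have "\<dots> = (\<Sum>i<k. \<Sum>j<k. \<Sum>a<k. \<Sum>b<k. (\<integral>\<omega>. offdiag_dev i j \<omega> * offdiag_dev a b \<omega> \<partial>M))"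
      by (intro sum.cong refl integral_sum_sum) (auto intro!: offdiag_dev_mult_integrable)
    finally show ?thesis .
  qed
  also have "\<dots> = (\<Sum>i<k. \<Sum>j<k. \<Sum>a<k. \<Sum>b<k. (if i \<noteq> j \<and> ((a = i \<and> b = j) \<or> (a = j \<and> b = i)) then corner_var m (ps i) (ps j) else 0))"
    using assms by (intro sum.cong refl offdiag_dev_covariance) auto
  also have "\<dots> = (\<Sum>i<k. \<Sum>j<k. (if i \<noteq> j then 2 * corner_var m (ps i) (ps j) else 0))"
    by (intro sum.cong refl sum_sum_pair_indicator) auto
  finally show ?thesis .
qed

lemma trace_sq_expectation_explicit:
  "expectation (\<lambda>\<omega>. trace_sq m (Qmat k m ps (\<lambda>i. Om i \<omega>))) =
     real (\<Sum>i<k. ps i) + (\<Sum>i<k. \<Sum>j<k. if i \<noteq> j then real (ps i) * real (ps j) / real m else 0)"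
proof -
  have "trace_sq_mean = (\<Sum>i<k. real (ps i) + (\<Sum>j<k. if i \<noteq> j then real (ps i) * real (ps j) / real m else 0))"
    unfolding trace_sq_mean_def overlap_mean_def by (intro sum.cong refl sum_diag_offdiag) auto
  then show ?thesis using trace_sq_expectation by (simp add: sum.distrib)
qed

lemma trace_sq_variance_approx:
  assumes "2 \<le> m"
  shows "\<bar>variance (\<lambda>\<omega>. trace_sq m (Qmat k m ps (\<lambda>i. Om i \<omega>)))
     - 4 * (\<Sum>i<k. \<Sum>j<k. if i \<noteq> j then real (ps i) * real (ps j) * (real m - real (ps i))
            * (real m - real (ps j)) / real m ^ 4 else 0)\<bar> \<le> 8 * real k * real k / (real m + 1)"
proof -
  define b where "b i j = real (ps i) * real (ps j) * (real m - real (ps i)) * (real m - real (ps j)) / real m ^ 4" for i j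
  have "variance (\<lambda>\<omega>. trace_sq m (Qmat k m ps (\<lambda>i. Om i \<omega>)))
      - 4 * (\<Sum>i<k. \<Sum>j<k. if i \<noteq> j then b i j else 0)
      = (\<Sum>i<k. \<Sum>j<k. if i \<noteq> j then 2 * corner_var m (ps i) (ps j) - 4 * b i j else 0)"
    unfolding trace_sq_variance[OF assms]
    by (simp add: sum_distrib_left sum_subtractf[symmetric] if_distrib cong: if_cong)
  also have "\<bar>\<dots>\<bar> \<le> (\<Sum>i<k. \<Sum>j<k. \<bar>if i \<noteq> j then 2 * corner_var m (ps i) (ps j) - 4 * b i j else 0\<bar>)"
    by (rule order_trans[OF sum_abs sum_mono[OF sum_abs]])
  also have "\<dots> \<le> (\<Sum>i<k. \<Sum>j<k. 4 / real m)"
    unfolding b_def using corner_var_approx[OF assms] ps_le by (intro sum_mono) auto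
  also have "\<dots> = 4 * real k * real k * (1 / real m)" by simp
  also have "\<dots> \<le> 4 * real k * real k * (2 / (real m + 1))"
    using assms by (intro mult_left_mono) (auto simp: divide_simps)
  finally show ?thesis unfolding b_def by (simp add: mult_ac)
qed

end

lemma eventually_le_pred_of_ratio_limit:
  fixes f :: "nat \<Rightarrow> nat \<Rightarrow> nat"
  assumes "\<forall>i<k. ((\<lambda>n. real (f n i) / real n) \<longlongrightarrow> y i) sequentially" "\<forall>i<k. y i < 1"
  shows "eventually (\<lambda>n. \<forall>i<k. f n i \<le> n - 1) sequentially"
proof -
  have "eventually (\<lambda>n. \<forall>i\<in>{..<k}. real (f n i) / real n < 1) sequentially"
    using assms by (intro eventually_ball_finite) (auto intro: order_tendstoD(2))
  then show ?thesis
    using eventually_gt_at_top[of 0] by eventually_elim (force simp: divide_less_eq)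
qed

theorem lemma1:
  fixes M :: "'a measure" and k :: nat and p :: "nat \<Rightarrow> nat \<Rightarrow> nat" and y :: "nat \<Rightarrow> real"
    and Om :: "nat \<Rightarrow> nat \<Rightarrow> 'a \<Rightarrow> (nat \<Rightarrow> nat \<Rightarrow> real)"
  assumes "prob_space M"
    and "k \<ge> 2"
    and "\<forall>n. \<forall>i<k. 0 < p n i"
    and "\<forall>i<k. ((\<lambda>n. real (p n i) / real n) \<longlongrightarrow> y i) sequentially"
    and "\<forall>i<k. 0 < y i \<and> y i < 1"
    and "\<forall>n. \<forall>i<k. Om n i \<in> measurable M borel"
    and "\<forall>n. prob_space.indep_vars M (\<lambda>_. borel) (Om n) {..<k}"
    and "\<forall>n. \<forall>i<k. haar_orthogonal (n - 1) (distr M borel (Om n i))"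
  shows "(\<forall>n. (\<forall>i<k. p n i \<le> n - 1) \<longrightarrow>
            prob_space.expectation M (\<lambda>\<omega>. trace_sq (n - 1) (Qmat k (n - 1) (p n) (\<lambda>i. Om n i \<omega>)))
            = real (\<Sum>i<k. p n i)
              + (\<Sum>i<k. \<Sum>j<k. if i \<noteq> j then real (p n i) * real (p n j) / (real n - 1) else 0))
       \<and> (\<lambda>n. prob_space.variance M (\<lambda>\<omega>. trace_sq (n - 1) (Qmat k (n - 1) (p n) (\<lambda>i. Om n i \<omega>)))
              - 4 * (\<Sum>i<k. \<Sum>j<k. if i \<noteq> j then
                    real (p n i) * real (p n j) * (real n - 1 - real (p n i)) * (real n - 1 - real (p n j))
                    / (real n - 1) ^ 4 else 0))
         \<in> O(\<lambda>n. 1 / real n)"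
proof -
  have model: "indep_haar M k (n - 1) (p n) (Om n)" if "\<forall>i<k. p n i \<le> n - 1" for n
    unfolding indep_haar_def indep_haar_axioms_def using assms(1,7,8) that by auto
  have real_pred: "real (n - 1) = real n - 1" if "\<forall>i<k. p n i \<le> n - 1" for n
  proof -
    have "0 < p n 0" "p n 0 \<le> n - 1" using that assms(2,3) by auto
    then show ?thesis by (simp add: of_nat_diff)
  qed
  have expectation: "prob_space.expectation M (\<lambda>\<omega>. trace_sq (n - 1) (Qmat k (n - 1) (p n) (\<lambda>i. Om n i \<omega>)))
      = real (\<Sum>i<k. p n i)
        + (\<Sum>i<k. \<Sum>j<k. if i \<noteq> j then real (p n i) * real (p n j) / (real n - 1) else 0)"
    if "\<forall>i<k. p n i \<le> n - 1" for n
    using indep_haar.trace_sq_expectation_explicit[OF model[OF that]] unfolding real_pred[OF that] .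
  have "eventually (\<lambda>n. 3 \<le> n \<and> (\<forall>i<k. p n i \<le> n - 1)) sequentially"
    using eventually_ge_at_top eventually_le_pred_of_ratio_limit[OF assms(4)] assms(5)
    by (auto intro: eventually_conj)
  then have "eventually (\<lambda>n. norm (prob_space.variance M (\<lambda>\<omega>. trace_sq (n - 1) (Qmat k (n - 1) (p n) (\<lambda>i. Om n i \<omega>)))
      - 4 * (\<Sum>i<k. \<Sum>j<k. if i \<noteq> j then real (p n i) * real (p n j) * (real n - 1 - real (p n i))
          * (real n - 1 - real (p n j)) / (real n - 1) ^ 4 else 0))
      \<le> 8 * real k * real k * norm (1 / real n)) sequentially"
  proof eventually_elim
    case (elim n)
    then have pred: "\<forall>i<k. p n i \<le> n - 1" and "2 \<le> n - 1" by auto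
    then show ?case
      using indep_haar.trace_sq_variance_approx[OF model[OF pred]] unfolding real_pred[OF pred] by simp
  qed
  then show ?thesis using expectation by (blast intro: bigoI)
qed

end
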